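(* Let $\mathbb{F}\in\{\mathbb{R},\mathbb{C},\mathbb{H}\}$, $G=\mathrm{SL}(3,\mathbb{F})$, and let $\mathcal{Q}_\sigma$ be the set of maximal $\sigma$-parabolic subgroups of $G$ (maximal parabolic $Q$ with $\sigma(Q)$ opposite to $Q$). The action of $H$ on $\mathcal{Q}_\sigma$ by conjugation has exactly four orbits, and these are the $H$-conjugacy classes of $Q_1,Q_2,Q_3,Q_4$.
   Context: $\theta(g)=(g^{-1})^\dagger$, $J=\mathrm{diag}(1,-1,-1)$, $\sigma(g)=J\theta(g)J$, $H$ the identity component of $G^\sigma$. $\mathfrak{a}$ = real traceless diagonal matrices; $\mathfrak{g}_{i,j}$ is the root space of $e_i-e_j$ (matrices with only nonzero entry in position $(i,j)$). $Q_i$ is the maximal parabolic subgroup whose Lie algebra contains $\mathfrak{a}$ and has nilradical $\mathfrak{n}_1=\mathfrak{g}_{1,3}\oplus\mathfrak{g}_{2,3}$, $\mathfrak{n}_2=\mathfrak{g}_{2,1}\oplus\mathfrak{g}_{3,1}$, $\mathfrak{n}_3=\mathfrak{g}_{1,2}\oplus\mathfrak{g}_{1,3}$, $\mathfrak{n}_4=\mathfrak{g}_{2,1}\oplus\mathfrak{g}_{2,3}$ respectively. *)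

theory Defs
  imports "HOL-Analysis.Analysis"
begin

datatype quat = Quat (qre: real) (qi: real) (qj: real) (qk: real)

lemma quat_eqI: "qre a = qre b \<Longrightarrow> qi a = qi b \<Longrightarrow> qj a = qj b \<Longrightarrow> qk a = qk b \<Longrightarrow> a = b"
  by (cases a, cases b) auto

instantiation quat :: ring_1
begin
definition "0 = Quat 0 0 0 0"
definition "1 = Quat 1 0 0 0"
definition "a + b = Quat (qre a + qre b) (qi a + qi b) (qj a + qj b) (qk a + qk b)"
definition "a - b = Quat (qre a - qre b) (qi a - qi b) (qj a - qj b) (qk a - qk b)"
definition "- a = Quat (- qre a) (- qi a) (- qj a) (- qk a)"
definition "a * b = Quat
   (qre a * qre b - qi a * qi b - qj a * qj b - qk a * qk b)
   (qre a * qi b + qi a * qre b + qj a * qk b - qk a * qj b)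
   (qre a * qj b - qi a * qk b + qj a * qre b + qk a * qi b)
   (qre a * qk b + qi a * qj b - qj a * qi b + qk a * qre b)"
instance
  by intro_classes
     (auto intro!: quat_eqI simp: zero_quat_def one_quat_def plus_quat_def minus_quat_def
        uminus_quat_def times_quat_def algebra_simps)
end

definition quat_coords :: "quat \<Rightarrow> real \<times> real \<times> real \<times> real" where
  "quat_coords q = (qre q, qi q, qj q, qk q)"

lemma inj_quat_coords: "inj quat_coords"
  by (rule injI) (auto simp: quat_coords_def intro: quat_eqI)

instantiation quat :: topological_space
begin
definition open_quat :: "quat set \<Rightarrow> bool" where
  "open_quat S \<longleftrightarrow> open (quat_coords ` S)"
lemma surj_quat_coords: "surj quat_coords"
  unfolding quat_coords_def surj_def by (metis quat.sel prod.collapse)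
instance
proof
  show "open (UNIV :: quat set)"
    unfolding open_quat_def using surj_quat_coords by simp
next
  fix S T :: "quat set" assume "open S" "open T"
  then show "open (S \<inter> T)"
    unfolding open_quat_def by (simp add: image_Int[OF inj_quat_coords] open_Int)
next
  fix K :: "quat set set" assume "\<forall>S\<in>K. open S"
  then show "open (\<Union>K)"
    unfolding open_quat_def by (auto simp: image_Union intro!: open_Union)
qed
end

class conjugation =
  fixes conjf :: "'a \<Rightarrow> 'a"

instantiation real :: conjugation
begin
definition "conjf (x::real) = x"
instance ..
end

instantiation complex :: conjugation
begin
definition "conjf (z::complex) = cnj z"
instance ..
end

instantiation quat :: conjugation
begin
definition "conjf q = Quat (qre q) (- qi q) (- qj q) (- qk q)"
instance ..
end

datatype ix = I1 | I2 | I3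

lemma UNIV_ix: "(UNIV :: ix set) = {I1, I2, I3}"
  using ix.exhaust by auto

instance ix :: finite
  by standard (simp add: UNIV_ix)

fun ixn :: "ix \<Rightarrow> nat" where
  "ixn I1 = 1" | "ixn I2 = 2" | "ixn I3 = 3"

type_synonym 'f mat3 = "'f ^ ix ^ ix"

definition ctrans :: "('f::conjugation) mat3 \<Rightarrow> 'f mat3" where
  "ctrans A = (\<chi> i j. conjf (A $ j $ i))"

definition theta :: "('f::{semiring_1,conjugation}) mat3 \<Rightarrow> 'f mat3" where
  "theta g = ctrans (matrix_inv g)"

definition Jmat :: "('f::ring_1) mat3" where
  "Jmat = (\<chi> i j. if i = j then (if i = I1 then 1 else -1) else 0)"

definition sigma :: "('f::{ring_1,conjugation}) mat3 \<Rightarrow> 'f mat3" where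
  "sigma g = Jmat ** theta g ** Jmat"

definition SL3R :: "real mat3 set" where
  "SL3R = {g. det g = 1}"

definition SL3C :: "complex mat3 set" where
  "SL3C = {g. det g = 1}"

text \<open>Standard embedding H -> M_2(C):
  a+bi+cj+dk |-> [[a+bi, c+di], [-c+di, a-bi]], extended blockwise.\<close>
definition qz :: "quat \<Rightarrow> complex" where "qz q = Complex (qre q) (qi q)"
definition qw :: "quat \<Rightarrow> complex" where "qw q = Complex (qj q) (qk q)"

definition quat_to_cmat :: "quat mat3 \<Rightarrow> complex ^ (ix + ix) ^ (ix + ix)" where
  "quat_to_cmat A = (\<chi> r s. case (r, s) of
      (Inl i, Inl j) \<Rightarrow> qz (A $ i $ j)
    | (Inl i, Inr j) \<Rightarrow> qw (A $ i $ j)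
    | (Inr i, Inl j) \<Rightarrow> - cnj (qw (A $ i $ j))
    | (Inr i, Inr j) \<Rightarrow> cnj (qz (A $ i $ j)))"

definition SL3H :: "quat mat3 set" where
  "SL3H = {g. invertible g \<and> det (quat_to_cmat g) = 1}"

definition conjset :: "('f::semiring_1) mat3 \<Rightarrow> 'f mat3 set \<Rightarrow> 'f mat3 set" where
  "conjset g S = (\<lambda>x. g ** x ** matrix_inv g) ` S"

definition is_subgroup :: "('f::semiring_1) mat3 set \<Rightarrow> 'f mat3 set \<Rightarrow> bool" where
  "is_subgroup G Q \<longleftrightarrow> Q \<subseteq> G \<and> mat 1 \<in> Q \<and> (\<forall>x\<in>Q. \<forall>y\<in>Q. x ** y \<in> Q)
      \<and> (\<forall>x\<in>Q. matrix_inv x \<in> Q)"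

text \<open>Standard minimal parabolic subgroup P_0 = Z_G(a) N (upper triangular elements of G),
  for the positive system e_i - e_j, i < j.\<close>
definition min_parabolic :: "('f::semiring_1) mat3 set \<Rightarrow> 'f mat3 set" where
  "min_parabolic G = {g \<in> G. \<forall>i j. ixn j < ixn i \<longrightarrow> g $ i $ j = 0}"

definition parabolic :: "('f::semiring_1) mat3 set \<Rightarrow> 'f mat3 set \<Rightarrow> bool" where
  "parabolic G Q \<longleftrightarrow> is_subgroup G Q \<and> (\<exists>g\<in>G. conjset g (min_parabolic G) \<subseteq> Q)"

definition maximal_parabolic :: "('f::semiring_1) mat3 set \<Rightarrow> 'f mat3 set \<Rightarrow> bool" where
  "maximal_parabolic G Q \<longleftrightarrow> parabolic G Q \<and> Q \<noteq> G \<and>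
     (\<forall>Q'. parabolic G Q' \<and> Q \<subseteq> Q' \<and> Q' \<noteq> G \<longrightarrow> Q' = Q)"

definition opposite :: "('f::{semiring_1,conjugation}) mat3 set \<Rightarrow> 'f mat3 set \<Rightarrow> 'f mat3 set \<Rightarrow> bool" where
  "opposite G Q Q' \<longleftrightarrow> (\<exists>g\<in>G. \<exists>P. parabolic G P \<and> min_parabolic G \<subseteq> P \<and>
       Q = conjset g P \<and> Q' = conjset g (theta ` P))"

definition sigma_parabolics :: "('f::{ring_1,conjugation}) mat3 set \<Rightarrow> 'f mat3 set set" where
  "sigma_parabolics G = {Q. maximal_parabolic G Q \<and> opposite G Q (sigma ` Q)}"

definition Hgrp :: "('f::{ring_1,conjugation,topological_space}) mat3 set \<Rightarrow> 'f mat3 set" where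
  "Hgrp G = connected_component_set {g \<in> G. sigma g = g} (mat 1)"

definition H_orbit :: "('f::{ring_1,conjugation,topological_space}) mat3 set \<Rightarrow> 'f mat3 set \<Rightarrow> 'f mat3 set set" where
  "H_orbit G Q = {conjset h Q | h. h \<in> Hgrp G}"

definition Q1 :: "('f::semiring_1) mat3 set \<Rightarrow> 'f mat3 set" where
  "Q1 G = {g \<in> G. g $ I3 $ I1 = 0 \<and> g $ I3 $ I2 = 0}"
definition Q2 :: "('f::semiring_1) mat3 set \<Rightarrow> 'f mat3 set" where
  "Q2 G = {g \<in> G. g $ I1 $ I2 = 0 \<and> g $ I1 $ I3 = 0}"
definition Q3 :: "('f::semiring_1) mat3 set \<Rightarrow> 'f mat3 set" where
  "Q3 G = {g \<in> G. g $ I2 $ I1 = 0 \<and> g $ I3 $ I1 = 0}"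
definition Q4 :: "('f::semiring_1) mat3 set \<Rightarrow> 'f mat3 set" where
  "Q4 G = {g \<in> G. g $ I1 $ I2 = 0 \<and> g $ I3 $ I2 = 0}"

definition four_orbits :: "('f::{ring_1,conjugation,topological_space}) mat3 set \<Rightarrow> bool" where
  "four_orbits G \<longleftrightarrow>
     H_orbit G ` sigma_parabolics G = {H_orbit G (Q1 G), H_orbit G (Q2 G), H_orbit G (Q3 G), H_orbit G (Q4 G)}
     \<and> card (H_orbit G ` sigma_parabolics G) = 4"

end

theory Submission
  imports Defs
begin

(*
  The argument is a computation with explicit 3 x 3 matrices that is uniform in
  F = R, C, H: all that is used is that F is a real division algebra with a positive
  involution, and that SL(3,F) is a matrix group containing all transvections and stable
  under conjugate transposition.

  A subgroup containing the upper triangular group P0 lies in Q1, lies in Q3, or is G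
  (row reduction by transvections), so every maximal parabolic subgroup is a conjugate
  g Q1 g^-1 or g Q3 g^-1.  If Q = g Q1 g^-1 is sigma-parabolic, then k = g^-1 sigma(g)
  normalizes theta(Q1) and therefore lies in it; since g* J g = J k^-1, the third column
  of g is not isotropic for the hermitian form J = diag(1,-1,-1).  The group H acts
  transitively on vectors of J-norm 1 and on vectors of J-norm -1 up to scalars (a
  rotation times a boost, each joined to 1 by a path in G^sigma), so H moves that column
  to a multiple of e3 or of e1, and Q is H-conjugate to Q1 or to Q2.  Conjugates of Q3
  are treated in the same way with the first column.  The four H-orbits are distinct:
  the first column of every h in H has J-norm 1, so h11 is never 0, which separates Q1
  from Q2 and Q3 from Q4; and Q1, Q2 are not even G-conjugate to Q3, Q4.
*)

section \<open>Real division algebras with involution\<close>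

lemma of_real_commute: "of_real r * (x::'a::real_algebra_1) = x * of_real r"
  by (simp add: of_real_def)

lemma of_real_left_commute: "(x::'a::real_algebra_1) * (of_real r * y) = of_real r * (x * y)"
  by (metis mult.assoc of_real_commute)

lemma inverse_mult_cancel_left: "(x::'a::division_ring) \<noteq> 0 \<Longrightarrow> inverse x * (x * y) = y"
  by (simp add: mult.assoc[symmetric])

lemma mult_inverse_cancel_left: "(x::'a::division_ring) \<noteq> 0 \<Longrightarrow> x * (inverse x * y) = y"
  by (simp add: mult.assoc[symmetric])

lemma inverse_mult_cancel_right: "(x::'a::division_ring) \<noteq> 0 \<Longrightarrow> y * inverse x * x = y"
  by (simp add: mult.assoc)

lemma mult_inverse_cancel_right: "(x::'a::division_ring) \<noteq> 0 \<Longrightarrow> y * x * inverse x = y"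
  by (simp add: mult.assoc)

lemma tendsto_scaleR_left_nhds_real_normed:
  "((\<lambda>r. r *\<^sub>R (x :: 'a::real_normed_vector)) \<longlongrightarrow> s *\<^sub>R x) (nhds s)"
  by (rule tendsto_scaleR[OF filterlim_ident tendsto_const])

lemma tendsto_nhds_if_continuous_on_UNIV:
  assumes "continuous_on UNIV f"
  shows "(f \<longlongrightarrow> f z) (nhds z)"
  unfolding tendsto_def eventually_nhds
proof (intro allI impI)
  fix B
  assume "open B" "f z \<in> B"
  then show "\<exists>A. open A \<and> z \<in> A \<and> (\<forall>x\<in>A. f x \<in> B)"
    using assms[unfolded continuous_on_topological, rule_format, OF UNIV_I \<open>open B\<close> \<open>f z \<in> B\<close>]
    by blast
qed

lemma eq_0_if_fixed_and_shifted_left: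
  fixes y a b :: "'a::ring_1_no_zero_divisors"
  assumes "y * a = a" "y * b = b + a"
  shows "a = 0"
proof (rule ccontr)
  assume "a \<noteq> 0"
  moreover have "(y - 1) * a = 0" using assms by (simp add: algebra_simps)
  ultimately show False using assms by simp
qed

lemma eq_0_if_fixed_and_shifted_right:
  fixes y a b :: "'a::ring_1_no_zero_divisors"
  assumes "a * y = a" "b * y = b + a"
  shows "a = 0"
proof (rule ccontr)
  assume "a \<noteq> 0"
  moreover have "a * (y - 1) = 0" using assms by (simp add: algebra_simps)
  ultimately show False using assms by simp
qed

text \<open>The squared norm
  \<open>normsq\<close> is a parameter because the quaternions of the definitions carry no norm.\<close>

class star_div_algebra =
  real_div_algebra + conjugation + topological_ab_group_add + topological_semigroup_mult +
  fixes normsq :: "'a \<Rightarrow> real"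
  assumes conj_add: "conjf (x + y) = conjf x + conjf y"
    and conj_mult: "conjf (x * y) = conjf y * conjf x"
    and conj_conj [simp]: "conjf (conjf x) = x"
    and conj_scaleR: "conjf (r *\<^sub>R x) = r *\<^sub>R conjf x"
    and conj_mult_self_scaleR: "conjf x * x = normsq x *\<^sub>R 1"
    and mult_conj_self_scaleR: "x * conjf x = normsq x *\<^sub>R 1"
    and normsq_nonneg: "0 \<le> normsq x"
    and normsq_eq_0: "normsq x = 0 \<Longrightarrow> x = 0"
    and tendsto_scaleR_left_nhds: "((\<lambda>r. r *\<^sub>R x) \<longlongrightarrow> s *\<^sub>R x) (nhds s)"

lemma conj_1 [simp]: "conjf (1 :: 'a::star_div_algebra) = 1"
  using conj_mult[of "conjf 1" "1 :: 'a"] by simp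

lemma conj_of_real [simp]: "conjf (of_real r :: 'a::star_div_algebra) = of_real r"
  by (simp add: of_real_def conj_scaleR)

lemma conj_0 [simp]: "conjf (0 :: 'a::star_div_algebra) = 0"
  using conj_of_real[of 0] by simp

lemma conj_minus: "conjf (- (x::'a::star_div_algebra)) = - conjf x"
  using conj_scaleR[of "-1" x] by simp

lemma conj_eq_0_iff [simp]: "conjf (x::'a::star_div_algebra) = 0 \<longleftrightarrow> x = 0"
  by (metis conj_0 conj_conj)

lemma conj_of_real_mult: "conjf (of_real r * (x::'a::star_div_algebra)) = of_real r * conjf x"
  by (simp add: conj_mult of_real_commute)

lemma conj_mult_self: "conjf (x::'a::star_div_algebra) * x = of_real (normsq x)"
  by (simp add: of_real_def conj_mult_self_scaleR)

lemma mult_conj_self: "(x::'a::star_div_algebra) * conjf x = of_real (normsq x)"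
  by (simp add: of_real_def mult_conj_self_scaleR)

lemma continuous_on_of_real_UNIV: "continuous_on UNIV (of_real :: real \<Rightarrow> 'a::star_div_algebra)"
  unfolding of_real_def continuous_on_def
  by (blast intro: tendsto_mono[OF at_within_le_nhds] tendsto_scaleR_left_nhds)

lemma continuous_on_of_real_star_div_algebra [continuous_intros]:
  "continuous_on S f \<Longrightarrow> continuous_on S (\<lambda>x. of_real (f x) :: 'a::star_div_algebra)"
  by (rule continuous_on_compose2[OF continuous_on_of_real_UNIV]) auto

lemma normsq_eq_0_iff [simp]: "normsq (x::'a::star_div_algebra) = 0 \<longleftrightarrow> x = 0"
  using normsq_eq_0[of x] conj_mult_self[of 0] by auto

lemma normsq_0 [simp]: "normsq (0 :: 'a::star_div_algebra) = 0"
  by simp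

lemma normsq_pos: "(x::'a::star_div_algebra) \<noteq> 0 \<Longrightarrow> 0 < normsq x"
  using normsq_nonneg[of x] normsq_eq_0_iff[of x] by linarith

lemma normsq_mult: "normsq ((x::'a::star_div_algebra) * y) = normsq x * normsq y"
proof -
  have "of_real (normsq (x * y)) = conjf y * (conjf x * x) * y"
    by (simp add: conj_mult_self[symmetric] conj_mult mult.assoc)
  also have "\<dots> = of_real (normsq x * normsq y)"
    by (simp add: conj_mult_self mult.assoc of_real_left_commute)
  finally show ?thesis by (simp only: of_real_eq_iff)
qed

lemma normsq_of_real [simp]: "normsq (of_real r :: 'a::star_div_algebra) = r * r"
  using conj_mult_self[of "of_real r :: 'a"] by (simp flip: of_real_mult)

lemma normsq_1 [simp]: "normsq (1 :: 'a::star_div_algebra) = 1"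
  using normsq_of_real[of 1] by simp

lemma normsq_conj [simp]: "normsq (conjf (x::'a::star_div_algebra)) = normsq x"
  using conj_mult_self[of "conjf x"] mult_conj_self[of x] by simp

lemma normsq_minus [simp]: "normsq (- (x::'a::star_div_algebra)) = normsq x"
  using conj_mult_self[of "- x"] conj_mult_self[of x] by (simp add: conj_minus)

instantiation real :: star_div_algebra
begin
definition "normsq_real (x :: real) = x * x"
instance
proof
  fix x y r s :: real
  show "((\<lambda>r. r *\<^sub>R x) \<longlongrightarrow> s *\<^sub>R x) (nhds s)"
    by (rule tendsto_scaleR_left_nhds_real_normed)
qed (simp_all add: normsq_real_def conjf_real_def)
end

instantiation complex :: star_div_algebra
begin
definition "normsq_complex (z :: complex) = (cmod z)\<^sup>2"
instance
proof
  fix x y :: complex and r s :: real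
  show "conjf x * x = normsq x *\<^sub>R 1" "x * conjf x = normsq x *\<^sub>R 1"
    using complex_norm_square[of x]
    by (simp_all add: normsq_complex_def conjf_complex_def scaleR_conv_of_real mult.commute)
  show "conjf (x * y) = conjf y * conjf x"
    by (simp add: conjf_complex_def mult.commute)
  show "((\<lambda>r. r *\<^sub>R x) \<longlongrightarrow> s *\<^sub>R x) (nhds s)"
    by (rule tendsto_scaleR_left_nhds_real_normed)
qed (simp_all add: normsq_complex_def conjf_complex_def)
end

lemma quat_eq_iff: "p = q \<longleftrightarrow> qre p = qre q \<and> qi p = qi q \<and> qj p = qj q \<and> qk p = qk q"
  by (auto intro: quat_eqI)

definition quat_sqnorm :: "quat \<Rightarrow> real" where
  "quat_sqnorm q = qre q * qre q + qi q * qi q + qj q * qj q + qk q * qk q"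

instantiation quat :: real_div_algebra
begin
definition "r *\<^sub>R q = Quat (r * qre q) (r * qi q) (r * qj q) (r * qk q)"
definition "inverse q =
  Quat (qre q / quat_sqnorm q) (- qi q / quat_sqnorm q) (- qj q / quat_sqnorm q)
    (- qk q / quat_sqnorm q)"
definition "divide p q = p * inverse (q :: quat)"
instance
proof
  fix q :: quat
  assume "q \<noteq> 0"
  then have n: "quat_sqnorm q \<noteq> 0"
    by (cases q) (auto simp: quat_sqnorm_def zero_quat_def add_nonneg_eq_0_iff)
  have e: "qre q * qre q + qi q * qi q + qj q * qj q + qk q * qk q = quat_sqnorm q"
    by (simp add: quat_sqnorm_def)
  show "inverse q * q = 1" "q * inverse q = 1"
    by (rule quat_eqI; simp add: times_quat_def inverse_quat_def one_quat_def
        add_divide_distrib[symmetric] diff_divide_distrib[symmetric] e n; simp add: algebra_simps)+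
qed (simp_all add: quat_eq_iff scaleR_quat_def inverse_quat_def divide_quat_def
    plus_quat_def times_quat_def zero_quat_def one_quat_def algebra_simps)
end

lemma continuous_on_quat_coords: "continuous_on UNIV quat_coords"
  unfolding continuous_on_open_invariant
proof (intro allI impI)
  fix B :: "(real \<times> real \<times> real \<times> real) set"
  assume "open B"
  have "quat_coords ` (quat_coords -` B) = B"
    using surj_quat_coords by (simp add: surj_image_vimage_eq)
  then show "\<exists>A. open A \<and> A \<inter> UNIV = quat_coords -` B \<inter> UNIV"
    using \<open>open B\<close> by (intro exI[of _ "quat_coords -` B"]) (simp add: open_quat_def)
qed

lemma continuous_on_quatI:
  assumes "continuous_on S (\<lambda>x. qre (f x))" "continuous_on S (\<lambda>x. qi (f x))"
    "continuous_on S (\<lambda>x. qj (f x))" "continuous_on S (\<lambda>x. qk (f x))"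
  shows "continuous_on S (f :: 'b::topological_space \<Rightarrow> quat)"
  unfolding continuous_on_open_invariant
proof (intro allI impI)
  fix B :: "quat set"
  assume "open B"
  have "continuous_on S (quat_coords \<circ> f)"
    unfolding o_def quat_coords_def using assms by (intro continuous_intros)
  then obtain A where "open A" "A \<inter> S = (quat_coords \<circ> f) -` (quat_coords ` B) \<inter> S"
    using \<open>open B\<close> unfolding continuous_on_open_invariant open_quat_def by blast
  moreover have "(quat_coords \<circ> f) -` (quat_coords ` B) = f -` B"
    by (simp add: vimage_def inj_image_mem_iff[OF inj_quat_coords])
  ultimately show "\<exists>A. open A \<and> A \<inter> S = f -` B \<inter> S"
    by auto
qed

lemma continuous_on_quat_components:
  assumes "continuous_on S f"
  shows "continuous_on S (\<lambda>x. qre (f x))" "continuous_on S (\<lambda>x. qi (f x))"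
    "continuous_on S (\<lambda>x. qj (f x))" "continuous_on S (\<lambda>x. qk (f x))"
proof -
  have "continuous_on S (\<lambda>x. quat_coords (f x))"
    by (rule continuous_on_compose2[OF continuous_on_quat_coords assms]) simp
  then have "continuous_on S (\<lambda>x. fst (quat_coords (f x)))"
    "continuous_on S (\<lambda>x. fst (snd (quat_coords (f x))))"
    "continuous_on S (\<lambda>x. fst (snd (snd (quat_coords (f x)))))"
    "continuous_on S (\<lambda>x. snd (snd (snd (quat_coords (f x)))))"
    by (intro continuous_intros; assumption)+
  then show "continuous_on S (\<lambda>x. qre (f x))" "continuous_on S (\<lambda>x. qi (f x))"
    "continuous_on S (\<lambda>x. qj (f x))" "continuous_on S (\<lambda>x. qk (f x))"
    by (simp_all add: quat_coords_def)
qed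

lemma continuous_on_quat_pair_components:
  "continuous_on UNIV (\<lambda>p :: quat \<times> quat. qre (fst p))"
  "continuous_on UNIV (\<lambda>p :: quat \<times> quat. qi (fst p))"
  "continuous_on UNIV (\<lambda>p :: quat \<times> quat. qj (fst p))"
  "continuous_on UNIV (\<lambda>p :: quat \<times> quat. qk (fst p))"
  "continuous_on UNIV (\<lambda>p :: quat \<times> quat. qre (snd p))"
  "continuous_on UNIV (\<lambda>p :: quat \<times> quat. qi (snd p))"
  "continuous_on UNIV (\<lambda>p :: quat \<times> quat. qj (snd p))"
  "continuous_on UNIV (\<lambda>p :: quat \<times> quat. qk (snd p))"
  by (intro continuous_on_quat_components continuous_intros)+

instance quat :: topological_monoid_add
proof
  fix a b :: quat
  have "continuous_on UNIV (\<lambda>p :: quat \<times> quat. fst p + snd p)"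
    unfolding plus_quat_def
    by (rule continuous_on_quatI; simp only: quat.sel; intro continuous_on_add
      continuous_on_quat_pair_components)
  from tendsto_nhds_if_continuous_on_UNIV[OF this, of "(a, b)"]
  show "((\<lambda>p. fst p + snd p) \<longlongrightarrow> a + b) (nhds a \<times>\<^sub>F nhds b)"
    by (simp add: nhds_prod)
qed

instance quat :: topological_ab_group_add
proof
  fix a :: quat
  have "continuous_on UNIV (uminus :: quat \<Rightarrow> quat)"
    unfolding uminus_quat_def
    by (rule continuous_on_quatI; simp only: quat.sel; intro continuous_intros
      continuous_on_quat_components)
  from tendsto_nhds_if_continuous_on_UNIV[OF this, of a]
  show "(uminus \<longlongrightarrow> - a) (nhds a)" .
qed

instance quat :: topological_semigroup_mult
proof
  fix a b :: quat
  have "continuous_on UNIV (\<lambda>p :: quat \<times> quat. fst p * snd p)"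
    unfolding times_quat_def
    by (rule continuous_on_quatI; simp only: quat.sel;
        intro continuous_on_add continuous_on_diff continuous_on_mult
          continuous_on_quat_pair_components)
  from tendsto_nhds_if_continuous_on_UNIV[OF this, of "(a, b)"]
  show "((\<lambda>p. fst p * snd p) \<longlongrightarrow> a * b) (nhds a \<times>\<^sub>F nhds b)"
    by (simp add: nhds_prod)
qed

instantiation quat :: star_div_algebra
begin
definition "normsq = quat_sqnorm"
instance
proof
  fix x y :: quat and r s :: real
  show "conjf (x + y) = conjf x + conjf y" "conjf (x * y) = conjf y * conjf x"
    "conjf (conjf x) = x" "conjf (r *\<^sub>R x) = r *\<^sub>R conjf x"
    by (simp_all add: quat_eq_iff conjf_quat_def plus_quat_def times_quat_def scaleR_quat_def)
  show "conjf x * x = normsq x *\<^sub>R 1" "x * conjf x = normsq x *\<^sub>R 1"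
    by (simp_all add: quat_eq_iff conjf_quat_def times_quat_def scaleR_quat_def one_quat_def
        normsq_quat_def quat_sqnorm_def)
  show "0 \<le> normsq x"
    by (simp add: normsq_quat_def quat_sqnorm_def)
  show "normsq x = 0 \<Longrightarrow> x = 0"
    by (cases x) (simp add: normsq_quat_def quat_sqnorm_def zero_quat_def add_nonneg_eq_0_iff)
  have "continuous_on UNIV (\<lambda>r. r *\<^sub>R x)"
    unfolding scaleR_quat_def
    by (rule continuous_on_quatI; simp only: quat.sel; intro continuous_intros)
  from tendsto_nhds_if_continuous_on_UNIV[OF this, of s]
  show "((\<lambda>r. r *\<^sub>R x) \<longlongrightarrow> s *\<^sub>R x) (nhds s)" .
qed
end

section \<open>\<open>3 \<times> 3\<close> matrices\<close>

lemma involution_image_eq: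
  assumes "\<And>y. y \<in> B \<Longrightarrow> f (f y) = y" "f ` A \<subseteq> B" "f ` B \<subseteq> A"
  shows "f ` A = B"
  using assms by (force intro: image_eqI)

lemma all_ix: "(\<forall>i. P i) \<longleftrightarrow> P I1 \<and> P I2 \<and> P I3"
  by (metis ix.exhaust)
lemma sum_UNIV_ix: "sum f (UNIV :: ix set) = f I1 + f I2 + f I3"
  by (simp add: UNIV_ix add.assoc)

lemma matrix_mult_mat3_entry:
  "((A :: 'a::semiring_1 mat3) ** B) $ i $ j = A$i$I1 * B$I1$j + A$i$I2 * B$I2$j + A$i$I3 * B$I3$j"
  by (simp add: matrix_matrix_mult_def sum_UNIV_ix)

lemma mat3_eq_iff: "(A :: 'a mat3) = B \<longleftrightarrow>
   A$I1$I1 = B$I1$I1 \<and> A$I1$I2 = B$I1$I2 \<and> A$I1$I3 = B$I1$I3 \<and>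
   A$I2$I1 = B$I2$I1 \<and> A$I2$I2 = B$I2$I2 \<and> A$I2$I3 = B$I2$I3 \<and>
   A$I3$I1 = B$I3$I1 \<and> A$I3$I2 = B$I3$I2 \<and> A$I3$I3 = B$I3$I3"
  by (auto simp: vec_eq_iff all_ix)

lemma mat1_mat3_entry: "(mat 1 :: 'a::semiring_1 mat3) $ i $ j = (if i = j then 1 else 0)"
  by (simp add: mat_def)

definition mk_mat3 :: "'a \<Rightarrow> 'a \<Rightarrow> 'a \<Rightarrow> 'a \<Rightarrow> 'a \<Rightarrow> 'a \<Rightarrow> 'a \<Rightarrow> 'a \<Rightarrow> 'a \<Rightarrow> 'a mat3" where
  "mk_mat3 a11 a12 a13 a21 a22 a23 a31 a32 a33 = (\<chi> i j. case i of
     I1 \<Rightarrow> (case j of I1 \<Rightarrow> a11 | I2 \<Rightarrow> a12 | I3 \<Rightarrow> a13)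
   | I2 \<Rightarrow> (case j of I1 \<Rightarrow> a21 | I2 \<Rightarrow> a22 | I3 \<Rightarrow> a23)
   | I3 \<Rightarrow> (case j of I1 \<Rightarrow> a31 | I2 \<Rightarrow> a32 | I3 \<Rightarrow> a33))"

lemma mk_mat3_entry[simp]:
  "mk_mat3 a11 a12 a13 a21 a22 a23 a31 a32 a33 $ I1 $ I1 = a11"
  "mk_mat3 a11 a12 a13 a21 a22 a23 a31 a32 a33 $ I1 $ I2 = a12"
  "mk_mat3 a11 a12 a13 a21 a22 a23 a31 a32 a33 $ I1 $ I3 = a13"
  "mk_mat3 a11 a12 a13 a21 a22 a23 a31 a32 a33 $ I2 $ I1 = a21"
  "mk_mat3 a11 a12 a13 a21 a22 a23 a31 a32 a33 $ I2 $ I2 = a22"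
  "mk_mat3 a11 a12 a13 a21 a22 a23 a31 a32 a33 $ I2 $ I3 = a23"
  "mk_mat3 a11 a12 a13 a21 a22 a23 a31 a32 a33 $ I3 $ I1 = a31"
  "mk_mat3 a11 a12 a13 a21 a22 a23 a31 a32 a33 $ I3 $ I2 = a32"
  "mk_mat3 a11 a12 a13 a21 a22 a23 a31 a32 a33 $ I3 $ I3 = a33"
  by (simp_all add: mk_mat3_def)

lemma ctrans_entry: "ctrans A $ i $ j = conjf (A $ j $ i)"
  by (simp add: ctrans_def)

lemma Jmat_entry:
  "(Jmat :: 'a::ring_1 mat3) $ i $ j = (if i = j then (if i = I1 then 1 else -1) else 0)"
  by (simp add: Jmat_def)

definition transvection :: "ix \<Rightarrow> ix \<Rightarrow> 'a::ring_1 \<Rightarrow> 'a mat3" where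
  "transvection i j t = (\<chi> k l. if k = l then 1 else if k = i \<and> l = j then t else 0)"

lemma transvection_entry:
  "transvection i j t $ k $ l = (if k = l then 1 else if k = i \<and> l = j then t else 0)"
  by (simp add: transvection_def)

lemma matrix_mult_transvection_entry:
  "i \<noteq> j \<Longrightarrow>
    ((A :: 'a::ring_1 mat3) ** transvection i j t) $ k $ l = A$k$l + (if l = j then A$k$i * t else 0)"
  by (cases i; cases j; cases k; cases l; simp add: matrix_mult_mat3_entry transvection_entry)

lemma transvection_matrix_mult_entry:
  "i \<noteq> j \<Longrightarrow>
    (transvection i j t ** (A :: 'a::ring_1 mat3)) $ k $ l = A$k$l + (if k = i then t * A$j$l else 0)"
  by (cases i; cases j; cases k; cases l; simp add: matrix_mult_mat3_entry transvection_entry)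

lemma transvection_0: "transvection i j 0 = mat 1"
  by (simp add: transvection_def mat_def vec_eq_iff)

lemma transvection_add:
  "i \<noteq> j \<Longrightarrow> transvection i j s ** transvection i j t = transvection i j (s + t)"
  by (simp add: vec_eq_iff transvection_matrix_mult_entry) (simp add: transvection_entry)

lemma matrix_inv_unique:
  fixes A :: "'a::semiring_1^'n^'n"
  assumes "A ** B = mat 1" "B ** A = mat 1"
  shows "matrix_inv A = B"
proof -
  have ex: "\<exists>A'. A ** A' = mat 1 \<and> A' ** A = mat 1" using assms by blast
  define C where "C = matrix_inv A"
  have C: "A ** C = mat 1" "C ** A = mat 1"
    using someI_ex[OF ex] unfolding C_def matrix_inv_def by auto
  have "C = C ** (A ** B)" using assms by simp
  also have "\<dots> = B" by (simp add: matrix_mul_assoc C)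
  finally show ?thesis unfolding C_def .
qed

lemma matrix_inv_invertible:
  fixes A :: "'a::semiring_1^'n^'n"
  assumes "invertible A"
  shows "A ** matrix_inv A = mat 1" "matrix_inv A ** A = mat 1"
  using assms someI_ex[of "\<lambda>A'. A ** A' = mat 1 \<and> A' ** A = mat 1"]
  unfolding invertible_def matrix_inv_def by auto

lemma ctrans_mult: "ctrans ((A :: 'a::star_div_algebra mat3) ** B) = ctrans B ** ctrans A"
  by (simp add: vec_eq_iff all_ix matrix_mult_mat3_entry ctrans_entry conj_add conj_mult)

lemma ctrans_ctrans[simp]: "ctrans (ctrans (A :: 'a::star_div_algebra mat3)) = A"
  by (simp add: vec_eq_iff ctrans_entry conj_conj)

lemma ctrans_mat1[simp]: "ctrans (mat 1 :: 'a::star_div_algebra mat3) = mat 1"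
  by (simp add: vec_eq_iff ctrans_entry mat1_mat3_entry)

lemma ctrans_Jmat[simp]: "ctrans (Jmat :: 'a::star_div_algebra mat3) = Jmat"
  by (simp add: vec_eq_iff ctrans_entry Jmat_entry conj_minus)

lemma Jmat_Jmat[simp]: "(Jmat :: 'a::ring_1 mat3) ** Jmat = mat 1"
  by (simp add: mat3_eq_iff matrix_mult_mat3_entry Jmat_entry mat1_mat3_entry)

lemma mk_mat3_mult:
  "(mk_mat3 a11 a12 a13 a21 a22 a23 a31 a32 a33 :: 'a::semiring_1 mat3) ** mk_mat3 b11 b12 b13 b21
      b22 b23 b31 b32 b33 =
  mk_mat3 (a11*b11 + a12*b21 + a13*b31) (a11*b12 + a12*b22 + a13*b32) (a11*b13 + a12*b23 + a13*b33)
     (a21*b11 + a22*b21 + a23*b31) (a21*b12 + a22*b22 + a23*b32) (a21*b13 + a22*b23 + a23*b33)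
     (a31*b11 + a32*b21 + a33*b31) (a31*b12 + a32*b22 + a33*b32) (a31*b13 + a32*b23 + a33*b33)"
  by (simp add: mat3_eq_iff matrix_mult_mat3_entry)

lemma mat1_eq_mk_mat3: "(mat 1 :: 'a::semiring_1 mat3) = mk_mat3 1 0 0 0 1 0 0 0 1"
  by (simp add: mat3_eq_iff mat1_mat3_entry)

lemma Jmat_eq_mk_mat3: "(Jmat :: 'a::ring_1 mat3) = mk_mat3 1 0 0 0 (-1) 0 0 0 (-1)"
  by (simp add: mat3_eq_iff Jmat_entry)

lemma ctrans_mk_mat3:
  "ctrans (mk_mat3 a11 a12 a13 a21 a22 a23 a31 a32 a33 :: 'a::star_div_algebra mat3) =
    mk_mat3 (conjf a11) (conjf a21) (conjf a31) (conjf a12) (conjf a22) (conjf a32)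
      (conjf a13) (conjf a23) (conjf a33)"
  by (simp add: mat3_eq_iff ctrans_entry)

lemma transvection_eq_mk_mat3: "transvection I1 I2 t = mk_mat3 1 t 0 0 1 0 0 0 1"
  "transvection I1 I3 t = mk_mat3 1 0 t 0 1 0 0 0 1"
  "transvection I2 I3 t = mk_mat3 1 0 0 0 1 t 0 0 1"
    "transvection I2 I1 t = mk_mat3 1 0 0 t 1 0 0 0 1"
  "transvection I3 I1 t = mk_mat3 1 0 0 0 1 0 t 0 1"
    "transvection I3 I2 t = mk_mat3 1 0 0 0 1 0 0 t 1"
  by (simp_all add: mat3_eq_iff transvection_entry)

lemma mk_mat3_eq_iff[simp]:
  "mk_mat3 a11 a12 a13 a21 a22 a23 a31 a32 a33 = mk_mat3 b11 b12 b13 b21 b22 b23 b31 b32 b33 \<longleftrightarrow>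
    a11 = b11 \<and> a12 = b12 \<and> a13 = b13 \<and> a21 = b21 \<and> a22 = b22 \<and> a23 = b23 \<and>
    a31 = b31 \<and> a32 = b32 \<and> a33 = b33"
  by (simp add: mat3_eq_iff)

lemma mat3_eq_mk_mat3:
  "(x :: 'a mat3) = mk_mat3 (x$I1$I1) (x$I1$I2) (x$I1$I3) (x$I2$I1) (x$I2$I2) (x$I2$I3)
    (x$I3$I1) (x$I3$I2) (x$I3$I3)"
  by (simp add: mat3_eq_iff)

text \<open>\<open>hyperplane_stab G r\<close> consists of the elements whose \<open>r\<close>-th row is a multiple of
  \<open>e\<^sub>r\<close>, i.e. the stabilizer of the coordinate hyperplane \<open>x\<^sub>r = 0\<close>; \<open>line_stab G c\<close> is
  the stabilizer of the coordinate line through \<open>e\<^sub>c\<close>.\<close>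

definition hyperplane_stab :: "('a::semiring_1) mat3 set \<Rightarrow> ix \<Rightarrow> 'a mat3 set" where
  "hyperplane_stab G r = {x \<in> G. \<forall>s. s \<noteq> r \<longrightarrow> x$r$s = 0}"
definition line_stab :: "('a::semiring_1) mat3 set \<Rightarrow> ix \<Rightarrow> 'a mat3 set" where
  "line_stab G c = {x \<in> G. \<forall>s. s \<noteq> c \<longrightarrow> x$s$c = 0}"

lemma Q_eq_stab: "Q1 G = hyperplane_stab G I3" "Q2 G = hyperplane_stab G I1" "Q3 G = line_stab G I1"
  "Q4 G = line_stab G I2"
  by (auto simp: Q1_def Q2_def Q3_def Q4_def hyperplane_stab_def line_stab_def all_ix)

lemma matrix_mult_entry_diag_row:
  "\<forall>s. s \<noteq> r \<longrightarrow> (y :: 'a::semiring_1 mat3)$r$s = 0 \<Longrightarrow> (y ** (k :: 'a mat3))$r$m = y$r$r * k$r$m"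
  by (cases r) (auto simp: matrix_mult_mat3_entry all_ix)

lemma matrix_mult_entry_diag_col:
  "\<forall>s. s \<noteq> c \<longrightarrow> (y :: 'a::semiring_1 mat3)$s$c = 0 \<Longrightarrow> ((k :: 'a mat3) ** y)$m$c = k$m$c * y$c$c"
  by (cases c) (auto simp: matrix_mult_mat3_entry all_ix)

definition weyl_s12 :: "'a::ring_1 mat3" where "weyl_s12 = mk_mat3 0 (-1) 0 1 0 0 0 0 1"
definition weyl_s23 :: "'a::ring_1 mat3" where "weyl_s23 = mk_mat3 1 0 0 0 0 (-1) 0 1 0"
definition weyl_cycle :: "'a::ring_1 mat3" where "weyl_cycle = mk_mat3 0 0 1 1 0 0 0 1 0"

lemma min_parabolic_iff: "x \<in> min_parabolic G \<longleftrightarrow> x \<in> G \<and> x$I2$I1 = 0 \<and> x$I3$I1 = 0 \<and> x$I3$I2 = 0"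
proof -
  have "(\<forall>i j. ixn j < ixn i \<longrightarrow> x $ i $ j = 0) \<longleftrightarrow> x$I2$I1 = 0 \<and> x$I3$I1 = 0 \<and> x$I3$I2 = 0"
    by (auto simp: all_ix)
  then show ?thesis by (simp add: min_parabolic_def)
qed

section \<open>Groups generated by transvections\<close>

locale transvection_group =
  fixes G :: "('a::star_div_algebra) mat3 set"
  assumes invertible_mem: "g \<in> G \<Longrightarrow> invertible g"
  and mult_mem: "g \<in> G \<Longrightarrow> h \<in> G \<Longrightarrow> g ** h \<in> G"
  and one_mem: "mat 1 \<in> G"
  and inv_mem: "g \<in> G \<Longrightarrow> matrix_inv g \<in> G"
  and transvection_mem: "i \<noteq> j \<Longrightarrow> transvection i j t \<in> G"
  and ctrans_mem: "g \<in> G \<Longrightarrow> ctrans g \<in> G"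
begin

lemma mult_matrix_inv: "g \<in> G \<Longrightarrow> g ** matrix_inv g = mat 1"
  using invertible_mem matrix_inv_invertible by blast
lemma matrix_inv_mult: "g \<in> G \<Longrightarrow> matrix_inv g ** g = mat 1"
  using invertible_mem matrix_inv_invertible by blast

lemma matrix_inv_mult_distrib: "g \<in> G \<Longrightarrow> h \<in> G \<Longrightarrow> matrix_inv (g ** h) = matrix_inv h ** matrix_inv g"
proof (rule matrix_inv_unique)
  assume g: "g \<in> G" and h: "h \<in> G"
  have "g ** h ** (matrix_inv h ** matrix_inv g) = g ** (h ** matrix_inv h) ** matrix_inv g"
    by (simp add: matrix_mul_assoc)
  then show "g ** h ** (matrix_inv h ** matrix_inv g) = mat 1" using g h
    by (simp add: mult_matrix_inv)
  have "matrix_inv h ** matrix_inv g ** (g ** h) = matrix_inv h ** (matrix_inv g ** g) ** h"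
    by (simp add: matrix_mul_assoc)
  then show "matrix_inv h ** matrix_inv g ** (g ** h) = mat 1" using g h
    by (simp add: matrix_inv_mult)
qed

lemma matrix_inv_matrix_inv: "g \<in> G \<Longrightarrow> matrix_inv (matrix_inv g) = g"
  by (rule matrix_inv_unique) (simp_all add: mult_matrix_inv matrix_inv_mult)

lemma matrix_inv_mat1[simp]: "matrix_inv (mat 1 :: 'a mat3) = mat 1"
  by (rule matrix_inv_unique) simp_all

lemma matrix_inv_eqI: "g \<in> G \<Longrightarrow> g ** h = mat 1 \<Longrightarrow> matrix_inv g = h"
proof -
  assume g: "g \<in> G" and e: "g ** h = mat 1"
  have "matrix_inv g = matrix_inv g ** (g ** h)" using e by simp
  also have "\<dots> = h" by (simp add: matrix_mul_assoc matrix_inv_mult g)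
  finally show ?thesis .
qed

lemma matrix_inv_eqI_left: "g \<in> G \<Longrightarrow> h ** g = mat 1 \<Longrightarrow> matrix_inv g = h"
  by (metis matrix_inv_eqI matrix_mul_assoc matrix_mul_lid matrix_mul_rid mult_matrix_inv)

lemma conjset_mat1[simp]: "conjset (mat 1) (S :: 'a mat3 set) = S"
  by (simp add: conjset_def)

lemma conjset_mult: "g \<in> G \<Longrightarrow> h \<in> G \<Longrightarrow> conjset (g ** h) S = conjset g (conjset h S)"
  by (auto simp: conjset_def image_image matrix_inv_mult_distrib matrix_mul_assoc)

lemma conjset_matrix_inv_cancel: "g \<in> G \<Longrightarrow> conjset (matrix_inv g) (conjset g S) = S"
  by (simp add: conjset_mult[symmetric] inv_mem matrix_inv_mult)

lemma conjset_cancel_matrix_inv: "g \<in> G \<Longrightarrow> conjset g (conjset (matrix_inv g) S) = S"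
  by (simp add: conjset_mult[symmetric] inv_mem mult_matrix_inv)

lemma conjset_inj: "g \<in> G \<Longrightarrow> conjset g A = conjset g B \<Longrightarrow> A = B"
  by (metis conjset_matrix_inv_cancel)

lemma conjset_mono: "A \<subseteq> B \<Longrightarrow> conjset g A \<subseteq> conjset g B"
  by (auto simp: conjset_def)

lemma conj_matrix_inv_conj: "g \<in> G \<Longrightarrow> g ** (matrix_inv g ** y ** g) ** matrix_inv g = y"
  by (simp add: matrix_mul_assoc mult_matrix_inv) (simp add: matrix_mul_assoc[symmetric]
    mult_matrix_inv)

lemma conjset_eqI:
  assumes g: "g \<in> G"
    and AB: "\<And>x. x \<in> A \<Longrightarrow> g ** x ** matrix_inv g \<in> B"
    and BA: "\<And>y. y \<in> B \<Longrightarrow> matrix_inv g ** y ** g \<in> A"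
  shows "conjset g A = B"
proof
  show "conjset g A \<subseteq> B"
    using AB by (auto simp: conjset_def)
  show "B \<subseteq> conjset g A"
    unfolding conjset_def using BA conj_matrix_inv_conj[OF g, symmetric] by blast
qed

lemma conjset_carrier: "g \<in> G \<Longrightarrow> conjset g G = G"
  by (rule conjset_eqI) (simp_all add: mult_mem inv_mem)

lemma is_subgroup_conjset: "is_subgroup G S \<Longrightarrow> g \<in> G \<Longrightarrow> is_subgroup G (conjset g S)"
proof -
  assume S: "is_subgroup G S" and g: "g \<in> G"
  have SG: "S \<subseteq> G" using S by (simp add: is_subgroup_def)
  show ?thesis unfolding is_subgroup_def
  proof (intro conjI ballI)
    show "conjset g S \<subseteq> G" using SG conjset_carrier[OF g] conjset_mono by blast
    show "mat 1 \<in> conjset g S" using S g unfolding conjset_def is_subgroup_def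
      by (auto intro!: image_eqI[of _ _ "mat 1"] simp: mult_matrix_inv)
  next
    fix x y assume "x \<in> conjset g S" "y \<in> conjset g S"
    then obtain a b where ab: "a \<in> S" "b \<in> S" "x = g ** a ** matrix_inv g"
      "y = g ** b ** matrix_inv g"
      by (auto simp: conjset_def)
    have "x ** y = g ** (a ** (matrix_inv g ** g) ** b) ** matrix_inv g"
      by (simp add: ab matrix_mul_assoc)
    also have "\<dots> = g ** (a ** b) ** matrix_inv g" by (simp add: matrix_inv_mult g)
    finally show "x ** y \<in> conjset g S" using S ab by (auto simp: conjset_def is_subgroup_def)
  next
    fix x assume "x \<in> conjset g S"
    then obtain a where a: "a \<in> S" "x = g ** a ** matrix_inv g" by (auto simp: conjset_def)
    have aG: "a \<in> G" using a SG by auto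
    have "matrix_inv x = g ** matrix_inv a ** matrix_inv g"
      using a g aG
      by (simp add: matrix_inv_mult_distrib mult_mem inv_mem matrix_inv_matrix_inv
          matrix_mul_assoc)
    then show "matrix_inv x \<in> conjset g S" using S a by (auto simp: conjset_def is_subgroup_def)
  qed
qed

lemma conjset_subgroup_self: "is_subgroup G S \<Longrightarrow> q \<in> S \<Longrightarrow> conjset q S = S"
proof -
  assume S: "is_subgroup G S" and q: "q \<in> S"
  show ?thesis
  proof (rule conjset_eqI)
    show "q \<in> G" using q S by (auto simp: is_subgroup_def)
    show "q ** x ** matrix_inv q \<in> S" if "x \<in> S" for x
      using S q that unfolding is_subgroup_def by blast
    show "matrix_inv q ** x ** q \<in> S" if "x \<in> S" for x
      using S q that unfolding is_subgroup_def by blast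
  qed
qed

lemma zero_row_not_mem: "g \<in> G \<Longrightarrow> \<forall>s. g$r$s = 0 \<Longrightarrow> False"
proof -
  assume g: "g \<in> G" and z: "\<forall>s. g$r$s = 0"
  have "(g ** matrix_inv g)$r$r = 1" using mult_matrix_inv[OF g] by (simp add: mat1_mat3_entry)
  moreover have "(g ** matrix_inv g)$r$r = 0" using z by (simp add: matrix_mult_mat3_entry)
  ultimately show False by simp
qed

lemma zero_col_not_mem: "g \<in> G \<Longrightarrow> \<forall>s. g$s$c = 0 \<Longrightarrow> False"
proof -
  assume g: "g \<in> G" and z: "\<forall>s. g$s$c = 0"
  have "(matrix_inv g ** g)$c$c = 1" using matrix_inv_mult[OF g] by (simp add: mat1_mat3_entry)
  moreover have "(matrix_inv g ** g)$c$c = 0" using z by (simp add: matrix_mult_mat3_entry)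
  ultimately show False by simp
qed

lemma hyperplane_stab_subset: "hyperplane_stab G r \<subseteq> G" by (auto simp: hyperplane_stab_def)
lemma line_stab_subset: "line_stab G r \<subseteq> G" by (auto simp: line_stab_def)

lemma matrix_inv_hyperplane_stab: "x \<in> hyperplane_stab G r \<Longrightarrow> matrix_inv x \<in> hyperplane_stab G r"
proof -
  assume x: "x \<in> hyperplane_stab G r"
  then have xG: "x \<in> G" and z: "\<forall>s. s \<noteq> r \<longrightarrow> x$r$s = 0" by (auto simp: hyperplane_stab_def)
  have e: "(x ** matrix_inv x)$r$s = x$r$r * matrix_inv x$r$s" for s
    by (rule matrix_mult_entry_diag_row[OF z])
  have nz: "x$r$r \<noteq> 0" using e[of r] mult_matrix_inv[OF xG] by (auto simp: mat1_mat3_entry)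
  have "\<forall>s. s \<noteq> r \<longrightarrow> matrix_inv x$r$s = 0"
  proof (intro allI impI)
    fix s assume "s \<noteq> r"
    then have "x$r$r * matrix_inv x$r$s = 0" using e[of s] mult_matrix_inv[OF xG]
      by (simp add: mat1_mat3_entry)
    then show "matrix_inv x$r$s = 0" using nz by simp
  qed
  then show ?thesis using inv_mem[OF xG] by (simp add: hyperplane_stab_def)
qed

lemma matrix_inv_line_stab: "x \<in> line_stab G c \<Longrightarrow> matrix_inv x \<in> line_stab G c"
proof -
  assume x: "x \<in> line_stab G c"
  then have xG: "x \<in> G" and z: "\<forall>s. s \<noteq> c \<longrightarrow> x$s$c = 0" by (auto simp: line_stab_def)
  have e: "(matrix_inv x ** x)$s$c = matrix_inv x$s$c * x$c$c" for s
    by (rule matrix_mult_entry_diag_col[OF z])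
  have nz: "x$c$c \<noteq> 0" using e[of c] matrix_inv_mult[OF xG] by (auto simp: mat1_mat3_entry)
  have "\<forall>s. s \<noteq> c \<longrightarrow> matrix_inv x$s$c = 0"
  proof (intro allI impI)
    fix s assume "s \<noteq> c"
    then have "matrix_inv x$s$c * x$c$c = 0" using e[of s] matrix_inv_mult[OF xG]
      by (simp add: mat1_mat3_entry)
    then show "matrix_inv x$s$c = 0" using nz by simp
  qed
  then show ?thesis using inv_mem[OF xG] by (simp add: line_stab_def)
qed

lemma is_subgroup_hyperplane_stab: "is_subgroup G (hyperplane_stab G r)"
  unfolding is_subgroup_def
proof (intro conjI ballI)
  show "hyperplane_stab G r \<subseteq> G" by (rule hyperplane_stab_subset)
  show "mat 1 \<in> hyperplane_stab G r" using one_mem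
    by (auto simp: hyperplane_stab_def mat1_mat3_entry)
  show "x ** y \<in> hyperplane_stab G r" if "x \<in> hyperplane_stab G r" "y \<in> hyperplane_stab G r" for x y
    using that matrix_mult_entry_diag_row[of r x y] mult_mem by (auto simp: hyperplane_stab_def)
  show "matrix_inv x \<in> hyperplane_stab G r" if "x \<in> hyperplane_stab G r" for x using that
    by (rule matrix_inv_hyperplane_stab)
qed

lemma is_subgroup_line_stab: "is_subgroup G (line_stab G c)"
  unfolding is_subgroup_def
proof (intro conjI ballI)
  show "line_stab G c \<subseteq> G" by (rule line_stab_subset)
  show "mat 1 \<in> line_stab G c" using one_mem by (auto simp: line_stab_def mat1_mat3_entry)
  show "x ** y \<in> line_stab G c" if "x \<in> line_stab G c" "y \<in> line_stab G c" for x y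
    using that matrix_mult_entry_diag_col[of c y x] mult_mem by (auto simp: line_stab_def)
  show "matrix_inv x \<in> line_stab G c" if "x \<in> line_stab G c" for x using that
    by (rule matrix_inv_line_stab)
qed

lemma Jmat_mem: "Jmat \<in> G"
proof -
  have "(Jmat :: 'a mat3) =
      (transvection I2 I3 1 ** transvection I3 I2 (-1) ** transvection I2 I3 1) **
      (transvection I2 I3 1 ** transvection I3 I2 (-1) ** transvection I2 I3 1)"
    by (simp add: transvection_eq_mk_mat3 Jmat_eq_mk_mat3 mk_mat3_mult)
  also have "\<dots> \<in> G" by (intro mult_mem transvection_mem) simp_all
  finally show ?thesis .
qed

lemma mult_Jmat_Jmat[simp]: "(A :: 'a mat3) ** Jmat ** Jmat = A"
  by (simp flip: matrix_mul_assoc)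

lemma mult_matrix_inv_cancel_right: "g \<in> G \<Longrightarrow> A ** g ** matrix_inv g = A"
  by (simp flip: matrix_mul_assoc add: mult_matrix_inv)
lemma matrix_inv_Jmat[simp]: "matrix_inv (Jmat :: 'a mat3) = Jmat"
  by (rule matrix_inv_eqI[OF Jmat_mem]) simp

lemma matrix_inv_ctrans: "g \<in> G \<Longrightarrow> matrix_inv (ctrans g) = ctrans (matrix_inv g)"
  by (rule matrix_inv_eqI) (simp_all add: ctrans_mem ctrans_mult[symmetric] matrix_inv_mult)

lemma theta_mem: "g \<in> G \<Longrightarrow> theta g \<in> G"
  by (simp add: theta_def ctrans_mem inv_mem)

lemma theta_mult: "g \<in> G \<Longrightarrow> h \<in> G \<Longrightarrow> theta (g ** h) = theta g ** theta h"
  by (simp add: theta_def matrix_inv_mult_distrib ctrans_mult)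

lemma theta_theta: "g \<in> G \<Longrightarrow> theta (theta g) = g"
  by (simp add: theta_def matrix_inv_ctrans inv_mem matrix_inv_matrix_inv)

lemma theta_Jmat[simp]: "theta (Jmat :: 'a mat3) = Jmat"
  by (simp add: theta_def)

lemma theta_mat1[simp]: "theta (mat 1 :: 'a mat3) = mat 1"
  by (simp add: theta_def)

lemma sigma_mem: "g \<in> G \<Longrightarrow> sigma g \<in> G"
  by (simp add: sigma_def mult_mem Jmat_mem theta_mem)

lemma sigma_mult: "g \<in> G \<Longrightarrow> h \<in> G \<Longrightarrow> sigma (g ** h) = sigma g ** sigma h"
proof -
  assume g: "g \<in> G" and h: "h \<in> G"
  have "sigma g ** sigma h = Jmat ** theta g ** (Jmat ** Jmat) ** theta h ** Jmat"
    by (simp add: sigma_def matrix_mul_assoc)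
  also have "\<dots> = sigma (g ** h)" by (simp add: sigma_def theta_mult g h matrix_mul_assoc)
  finally show ?thesis by simp
qed

lemma sigma_mat1[simp]: "sigma (mat 1 :: 'a mat3) = mat 1"
  by (simp add: sigma_def)

lemma sigma_sigma: "g \<in> G \<Longrightarrow> sigma (sigma g) = g"
proof -
  assume g: "g \<in> G"
  have "sigma (sigma g) = Jmat ** (theta Jmat ** theta (theta g) ** theta Jmat) ** Jmat"
    by (simp add: sigma_def theta_mult Jmat_mem theta_mem g mult_mem)
  also have "\<dots> = (Jmat ** Jmat) ** g ** (Jmat ** Jmat)"
    by (simp add: theta_theta g matrix_mul_assoc)
  finally show ?thesis by simp
qed

lemma sigma_matrix_inv: "g \<in> G \<Longrightarrow> sigma (matrix_inv g) = matrix_inv (sigma g)"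
proof -
  assume g: "g \<in> G"
  have "sigma g ** sigma (matrix_inv g) = mat 1"
    by (simp add: sigma_mult[symmetric] g inv_mem mult_matrix_inv)
  then show ?thesis by (simp add: matrix_inv_eqI sigma_mem g)
qed

lemma sigma_conjset: "X \<subseteq> G \<Longrightarrow> g \<in> G \<Longrightarrow> sigma ` conjset g X = conjset (sigma g) (sigma ` X)"
proof -
  assume X: "X \<subseteq> G" and g: "g \<in> G"
  have "sigma (g ** x ** matrix_inv g) = sigma g ** sigma x ** matrix_inv (sigma g)" if "x \<in> X"
    for x
    using that X g by (simp add: sigma_mult mult_mem inv_mem sigma_matrix_inv subsetD)
  then show ?thesis unfolding conjset_def by (auto simp: image_image intro!: image_cong)
qed

lemma Jmat_conj_entry: "(Jmat ** (x :: 'a mat3) ** Jmat)$i$j = Jmat$i$i * x$i$j * Jmat$j$j"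
  by (cases i; cases j; simp add: matrix_mult_mat3_entry Jmat_entry)

lemma theta_hyperplane_stab_mem: "x \<in> hyperplane_stab G r \<Longrightarrow> theta x \<in> line_stab G r"
proof -
  assume x: "x \<in> hyperplane_stab G r"
  then have "matrix_inv x \<in> hyperplane_stab G r" by (rule matrix_inv_hyperplane_stab)
  then show ?thesis using x
    by (auto simp: hyperplane_stab_def line_stab_def theta_def ctrans_entry ctrans_mem inv_mem)
qed

lemma theta_line_stab_mem: "x \<in> line_stab G r \<Longrightarrow> theta x \<in> hyperplane_stab G r"
proof -
  assume x: "x \<in> line_stab G r"
  then have "matrix_inv x \<in> line_stab G r" by (rule matrix_inv_line_stab)
  then show ?thesis using x
    by (auto simp: hyperplane_stab_def line_stab_def theta_def ctrans_entry ctrans_mem inv_mem)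
qed

lemma sigma_hyperplane_stab_mem: "x \<in> hyperplane_stab G r \<Longrightarrow> sigma x \<in> line_stab G r"
  using theta_hyperplane_stab_mem[of x r]
  by (auto simp: line_stab_def sigma_def Jmat_conj_entry mult_mem Jmat_mem)

lemma sigma_line_stab_mem: "x \<in> line_stab G r \<Longrightarrow> sigma x \<in> hyperplane_stab G r"
  using theta_line_stab_mem[of x r]
  by (auto simp: hyperplane_stab_def sigma_def Jmat_conj_entry mult_mem Jmat_mem)

lemma theta_hyperplane_stab: "theta ` hyperplane_stab G r = line_stab G r"
  using theta_hyperplane_stab_mem theta_line_stab_mem
  by (intro involution_image_eq theta_theta[OF subsetD[OF line_stab_subset]]) auto

lemma theta_line_stab: "theta ` line_stab G r = hyperplane_stab G r"
  using theta_hyperplane_stab_mem theta_line_stab_mem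
  by (intro involution_image_eq theta_theta[OF subsetD[OF hyperplane_stab_subset]]) auto

lemma sigma_hyperplane_stab: "sigma ` hyperplane_stab G r = line_stab G r"
  using sigma_hyperplane_stab_mem sigma_line_stab_mem
  by (intro involution_image_eq sigma_sigma[OF subsetD[OF line_stab_subset]]) auto

lemma sigma_line_stab: "sigma ` line_stab G r = hyperplane_stab G r"
  using sigma_hyperplane_stab_mem sigma_line_stab_mem
  by (intro involution_image_eq sigma_sigma[OF subsetD[OF hyperplane_stab_subset]]) auto

lemma transvection_hyperplane_stab: "i \<noteq> j \<Longrightarrow> i \<noteq> r \<Longrightarrow> transvection i j t \<in> hyperplane_stab G r"
  using transvection_mem by (auto simp: hyperplane_stab_def transvection_entry)

lemma transvection_line_stab: "i \<noteq> j \<Longrightarrow> j \<noteq> c \<Longrightarrow> transvection i j t \<in> line_stab G c"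
  using transvection_mem by (auto simp: line_stab_def transvection_entry)

lemma self_normalizing_hyperplane_stab:
  assumes k: "k \<in> G" and N: "conjset k (hyperplane_stab G r) = hyperplane_stab G r"
  shows "k \<in> hyperplane_stab G r"
proof -
  have "k$r$s = 0" if s: "s \<noteq> r" for s
  proof -
    have x: "transvection s r 1 \<in> hyperplane_stab G r" using s
      by (simp add: transvection_hyperplane_stab)
    then have "k ** transvection s r 1 ** matrix_inv k \<in> hyperplane_stab G r" using N
      unfolding conjset_def by blast
    then obtain y where y: "y \<in> hyperplane_stab G r" "y = k ** transvection s r 1 ** matrix_inv k"
      by blast
    have "y ** k = k ** transvection s r 1" using y(2)
      by (simp add: matrix_mul_assoc[symmetric] matrix_inv_mult k)
    then have e: "(y ** k)$r$m = (k ** transvection s r 1)$r$m" for m by simp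
    have z: "\<forall>s. s \<noteq> r \<longrightarrow> y$r$s = 0" using y(1) by (simp add: hyperplane_stab_def)
    have "y$r$r * k$r$s = k$r$s" using e[of s] s
      by (simp add: matrix_mult_entry_diag_row[OF z] matrix_mult_transvection_entry)
    moreover have "y$r$r * k$r$r = k$r$r + k$r$s" using e[of r] s
      by (simp add: matrix_mult_entry_diag_row[OF z] matrix_mult_transvection_entry)
    ultimately show ?thesis by (rule eq_0_if_fixed_and_shifted_left)
  qed
  then show ?thesis using k by (simp add: hyperplane_stab_def)
qed

lemma self_normalizing_line_stab:
  assumes k: "k \<in> G" and N: "conjset k (line_stab G c) = line_stab G c"
  shows "k \<in> line_stab G c"
proof -
  have "k$s$c = 0" if s: "s \<noteq> c" for s
  proof -
    have x: "transvection c s 1 \<in> line_stab G c" using s by (simp add: transvection_line_stab)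
    then have "transvection c s 1 \<in> conjset k (line_stab G c)" using N by simp
    then obtain y where y: "y \<in> line_stab G c" "transvection c s 1 = k ** y ** matrix_inv k"
      by (auto simp: conjset_def)
    have "transvection c s 1 ** k = k ** y" using y(2)
      by (simp add: matrix_mul_assoc[symmetric] matrix_inv_mult k)
    then have e: "(transvection c s 1 ** k)$m$c = (k ** y)$m$c" for m by simp
    have z: "\<forall>s. s \<noteq> c \<longrightarrow> y$s$c = 0" using y(1) by (simp add: line_stab_def)
    have "k$s$c * y$c$c = k$s$c" using e[of s] s
      by (simp add: matrix_mult_entry_diag_col[OF z] transvection_matrix_mult_entry)
    moreover have "k$c$c * y$c$c = k$c$c + k$s$c" using e[of c] s
      by (simp add: matrix_mult_entry_diag_col[OF z] transvection_matrix_mult_entry)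
    ultimately show ?thesis by (rule eq_0_if_fixed_and_shifted_right)
  qed
  then show ?thesis using k by (simp add: line_stab_def)
qed

lemma conjset_hyperplane_stab_ne_line_stab:
  assumes g: "g \<in> G" shows "conjset g (hyperplane_stab G I3) \<noteq> line_stab G I1"
proof
  assume c: "conjset g (hyperplane_stab G I3) = line_stab G I1"
  define u where "u = matrix_inv g"
  have u: "u \<in> G" using g by (simp add: u_def inv_mem)
  have N: "conjset u (line_stab G I1) = hyperplane_stab G I3" unfolding u_def
    by (metis c conjset_matrix_inv_cancel[OF g])
  have step: "\<exists>y. (\<forall>j. y * u$I3$j = (u ** x)$I3$j)" if x: "x \<in> line_stab G I1" for x
  proof -
    have "u ** x ** matrix_inv u \<in> hyperplane_stab G I3" using N x unfolding conjset_def by blast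
    then obtain y where y: "y \<in> hyperplane_stab G I3" "y = u ** x ** matrix_inv u" by blast
    have "y ** u = u ** x" using y(2) by (simp add: matrix_mul_assoc[symmetric] matrix_inv_mult u)
    then have e: "(y ** u)$I3$m = (u ** x)$I3$m" for m by simp
    have z: "\<forall>s. s \<noteq> I3 \<longrightarrow> y$I3$s = 0" using y(1) by (simp add: hyperplane_stab_def)
    have "y$I3$I3 * u$I3$m = (u ** x)$I3$m" for m using e[of m]
      by (simp add: matrix_mult_entry_diag_row[OF z])
    then show ?thesis by blast
  qed
  obtain y1 where y1: "\<And>j. y1 * u$I3$j = (u ** transvection I1 I2 1)$I3$j"
    using step[of "transvection I1 I2 1"] by (auto simp: transvection_line_stab)
  have u31: "u$I3$I1 = 0"
    using y1[of I1] y1[of I2]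
    by (intro eq_0_if_fixed_and_shifted_left[of y1 _ "u$I3$I2"]) (auto simp:
        matrix_mult_transvection_entry)
  obtain y2 where y2: "\<And>j. y2 * u$I3$j = (u ** transvection I2 I3 1)$I3$j"
    using step[of "transvection I2 I3 1"] by (auto simp: transvection_line_stab)
  have u32: "u$I3$I2 = 0"
    using y2[of I2] y2[of I3]
    by (intro eq_0_if_fixed_and_shifted_left[of y2 _ "u$I3$I3"]) (auto simp:
        matrix_mult_transvection_entry)
  obtain y3 where y3: "\<And>j. y3 * u$I3$j = (u ** transvection I3 I2 1)$I3$j"
    using step[of "transvection I3 I2 1"] by (auto simp: transvection_line_stab)
  have u33: "u$I3$I3 = 0"
    using y3[of I3] y3[of I2] u32 by (auto simp: matrix_mult_transvection_entry)
  show False using zero_row_not_mem[OF u, of I3] u31 u32 u33 by (auto simp: all_ix)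
qed

lemma weyl_s12_mem: "weyl_s12 \<in> G"
proof -
  have "(weyl_s12 :: 'a mat3) =
      transvection I1 I2 (-1) ** transvection I2 I1 1 ** transvection I1 I2 (-1)"
    by (simp add: transvection_eq_mk_mat3 weyl_s12_def mk_mat3_mult)
  also have "\<dots> \<in> G" by (intro mult_mem transvection_mem) simp_all
  finally show ?thesis .
qed

lemma weyl_s23_mem: "weyl_s23 \<in> G"
proof -
  have "(weyl_s23 :: 'a mat3) =
      transvection I2 I3 (-1) ** transvection I3 I2 1 ** transvection I2 I3 (-1)"
    by (simp add: transvection_eq_mk_mat3 weyl_s23_def mk_mat3_mult)
  also have "\<dots> \<in> G" by (intro mult_mem transvection_mem) simp_all
  finally show ?thesis .
qed

lemma weyl_cycle_mem: "weyl_cycle \<in> G"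
proof -
  have "(weyl_cycle :: 'a mat3) = weyl_s12 ** weyl_s23"
    by (simp add: weyl_s12_def weyl_s23_def weyl_cycle_def mk_mat3_mult)
  also have "\<dots> \<in> G" by (rule mult_mem[OF weyl_s12_mem weyl_s23_mem])
  finally show ?thesis .
qed

lemma matrix_inv_weyl_s12: "matrix_inv (weyl_s12 :: 'a mat3) = mk_mat3 0 1 0 (-1) 0 0 0 0 1"
  by (rule matrix_inv_eqI[OF weyl_s12_mem]) (simp add: weyl_s12_def mk_mat3_mult mat1_eq_mk_mat3)

lemma matrix_inv_weyl_cycle: "matrix_inv (weyl_cycle :: 'a mat3) = mk_mat3 0 1 0 0 0 1 1 0 0"
  by (rule matrix_inv_eqI[OF weyl_cycle_mem]) (simp add: weyl_cycle_def mk_mat3_mult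
    mat1_eq_mk_mat3)

lemma conjset_weyl_cycle_hyperplane_stab:
  "conjset weyl_cycle (hyperplane_stab G I3) = hyperplane_stab G I1"
proof (rule conjset_eqI[OF weyl_cycle_mem])
  fix x assume x: "x \<in> hyperplane_stab G I3"
  then show "weyl_cycle ** x ** matrix_inv weyl_cycle \<in> hyperplane_stab G I1"
    using mult_mem[OF mult_mem[OF weyl_cycle_mem] inv_mem[OF weyl_cycle_mem]]
    by (simp add: hyperplane_stab_def all_ix matrix_inv_weyl_cycle) (simp add: weyl_cycle_def
      matrix_mult_mat3_entry)
next
  fix x assume x: "x \<in> hyperplane_stab G I1"
  then show "matrix_inv weyl_cycle ** x ** weyl_cycle \<in> hyperplane_stab G I3"
    using mult_mem[OF mult_mem[OF inv_mem[OF weyl_cycle_mem]] weyl_cycle_mem]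
    by (simp add: hyperplane_stab_def all_ix matrix_inv_weyl_cycle) (simp add: weyl_cycle_def
      matrix_mult_mat3_entry)
qed

lemma conjset_weyl_cycle_line_stab: "conjset weyl_cycle (line_stab G I3) = line_stab G I1"
proof (rule conjset_eqI[OF weyl_cycle_mem])
  fix x assume x: "x \<in> line_stab G I3"
  then show "weyl_cycle ** x ** matrix_inv weyl_cycle \<in> line_stab G I1"
    using mult_mem[OF mult_mem[OF weyl_cycle_mem] inv_mem[OF weyl_cycle_mem]]
    by (simp add: line_stab_def all_ix matrix_inv_weyl_cycle) (simp add: weyl_cycle_def
      matrix_mult_mat3_entry)
next
  fix x assume x: "x \<in> line_stab G I1"
  then show "matrix_inv weyl_cycle ** x ** weyl_cycle \<in> line_stab G I3"
    using mult_mem[OF mult_mem[OF inv_mem[OF weyl_cycle_mem]] weyl_cycle_mem]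
    by (simp add: line_stab_def all_ix matrix_inv_weyl_cycle) (simp add: weyl_cycle_def
      matrix_mult_mat3_entry)
qed

lemma conjset_weyl_s12_line_stab: "conjset weyl_s12 (line_stab G I1) = line_stab G I2"
proof (rule conjset_eqI[OF weyl_s12_mem])
  fix x assume x: "x \<in> line_stab G I1"
  then show "weyl_s12 ** x ** matrix_inv weyl_s12 \<in> line_stab G I2"
    using mult_mem[OF mult_mem[OF weyl_s12_mem] inv_mem[OF weyl_s12_mem]]
    by (simp add: line_stab_def all_ix matrix_inv_weyl_s12) (simp add: weyl_s12_def
      matrix_mult_mat3_entry)
next
  fix x assume x: "x \<in> line_stab G I2"
  then show "matrix_inv weyl_s12 ** x ** weyl_s12 \<in> line_stab G I1"
    using mult_mem[OF mult_mem[OF inv_mem[OF weyl_s12_mem]] weyl_s12_mem]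
    by (simp add: line_stab_def all_ix matrix_inv_weyl_s12) (simp add: weyl_s12_def
      matrix_mult_mat3_entry)
qed

lemma conjset_weyl_s12_hyperplane_stab:
  "conjset weyl_s12 (hyperplane_stab G I1) = hyperplane_stab G I2"
proof (rule conjset_eqI[OF weyl_s12_mem])
  fix x assume x: "x \<in> hyperplane_stab G I1"
  then show "weyl_s12 ** x ** matrix_inv weyl_s12 \<in> hyperplane_stab G I2"
    using mult_mem[OF mult_mem[OF weyl_s12_mem] inv_mem[OF weyl_s12_mem]]
    by (simp add: hyperplane_stab_def all_ix matrix_inv_weyl_s12) (simp add: weyl_s12_def
      matrix_mult_mat3_entry)
next
  fix x assume x: "x \<in> hyperplane_stab G I2"
  then show "matrix_inv weyl_s12 ** x ** weyl_s12 \<in> hyperplane_stab G I1"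
    using mult_mem[OF mult_mem[OF inv_mem[OF weyl_s12_mem]] weyl_s12_mem]
    by (simp add: hyperplane_stab_def all_ix matrix_inv_weyl_s12) (simp add: weyl_s12_def
      matrix_mult_mat3_entry)
qed

end

section \<open>Subgroups containing the minimal parabolic subgroup\<close>

lemma commutator_transvection31_12:
  "transvection I3 I1 s ** transvection I1 I2 1 ** transvection I3 I1 (-s) ** transvection I1 I2 (-1) =
    (transvection I3 I2 s :: 'a::ring_1 mat3)"
  by (simp add: transvection_eq_mk_mat3 mk_mat3_mult algebra_simps)

lemma commutator_transvection23_31:
  "transvection I2 I3 1 ** transvection I3 I1 s ** transvection I2 I3 (-1) ** transvection I3 I1 (-s) =
    (transvection I2 I1 s :: 'a::ring_1 mat3)"
  by (simp add: transvection_eq_mk_mat3 mk_mat3_mult algebra_simps)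

lemma commutator_transvection32_21:
  "transvection I3 I2 1 ** transvection I2 I1 s ** transvection I3 I2 (-1) ** transvection I2 I1 (-s) =
    (transvection I3 I1 s :: 'a::ring_1 mat3)"
  by (simp add: transvection_eq_mk_mat3 mk_mat3_mult algebra_simps)

locale min_parabolic_overgroup = transvection_group G for G :: "('a::star_div_algebra) mat3 set" +
  fixes S :: "'a mat3 set"
  assumes subgroup_S: "is_subgroup G S" and min_parabolic_subset_S: "min_parabolic G \<subseteq> S"
begin

lemma S_imp_mem: "x \<in> S \<Longrightarrow> x \<in> G" using subgroup_S by (auto simp: is_subgroup_def)
lemma S_mult: "x \<in> S \<Longrightarrow> y \<in> S \<Longrightarrow> x ** y \<in> S" using subgroup_S by (auto simp: is_subgroup_def)
lemma S_matrix_inv: "x \<in> S \<Longrightarrow> matrix_inv x \<in> S" using subgroup_S by (auto simp: is_subgroup_def)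

lemma upper_triangular_mem_S: "x \<in> G \<Longrightarrow> x$I2$I1 = 0 \<Longrightarrow> x$I3$I1 = 0 \<Longrightarrow> x$I3$I2 = 0 \<Longrightarrow> x \<in> S"
  using min_parabolic_subset_S by (auto simp: min_parabolic_iff)

lemma transvection12_mem_S: "transvection I1 I2 t \<in> S"
  and transvection13_mem_S: "transvection I1 I3 t \<in> S"
    and transvection23_mem_S: "transvection I2 I3 t \<in> S"
  by (auto intro!: upper_triangular_mem_S transvection_mem simp: transvection_entry)

lemma S_cancel_left: "u \<in> S \<Longrightarrow> g \<in> G \<Longrightarrow> u ** g \<in> S \<Longrightarrow> g \<in> S"
proof -
  assume u: "u \<in> S" and g: "g \<in> G" and ug: "u ** g \<in> S"
  have "g = matrix_inv u ** (u ** g)" by (simp add: matrix_mul_assoc matrix_inv_mult S_imp_mem u)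
  then show ?thesis using S_mult[OF S_matrix_inv[OF u] ug] by simp
qed

lemma transvection32_mem_S_if_31: "(\<And>s. transvection I3 I1 s \<in> S) \<Longrightarrow> transvection I3 I2 s \<in> S"
  by (metis commutator_transvection31_12 S_mult transvection12_mem_S)

lemma transvection21_mem_S_if_31: "(\<And>s. transvection I3 I1 s \<in> S) \<Longrightarrow> transvection I2 I1 s \<in> S"
  by (metis commutator_transvection23_31 S_mult transvection23_mem_S)

lemma transvection31_mem_S_if_32_21:
  "(\<And>s. transvection I3 I2 s \<in> S) \<Longrightarrow> (\<And>s. transvection I2 I1 s \<in> S) \<Longrightarrow> transvection I3 I1 s \<in> S"
  by (metis commutator_transvection32_21 S_mult)

lemma lower_left_block_not_mem:
  "g \<in> G \<Longrightarrow> g$I2$I1 = 0 \<Longrightarrow> g$I3$I1 = 0 \<Longrightarrow> g$I2$I2 = 0 \<Longrightarrow> g$I3$I2 = 0 \<Longrightarrow> False"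
proof -
  assume g: "g \<in> G" and z: "g$I2$I1 = 0" "g$I3$I1 = 0" "g$I2$I2 = 0" "g$I3$I2 = 0"
  let ?h = "matrix_inv g"
  have e1: "?h$I1$I1 * g$I1$I1 = 1" using arg_cong[OF matrix_inv_mult[OF g], of "\<lambda>m. m$I1$I1"] z
    by (simp add: matrix_mult_mat3_entry mat1_mat3_entry)
  have e2: "?h$I1$I1 * g$I1$I2 = 0" using arg_cong[OF matrix_inv_mult[OF g], of "\<lambda>m. m$I1$I2"] z
    by (simp add: matrix_mult_mat3_entry mat1_mat3_entry)
  have "?h$I1$I1 \<noteq> 0" using e1 by auto
  then have "g$I1$I2 = 0" using e2 by simp
  then show False using zero_col_not_mem[OF g, of I2] z by (auto simp: all_ix)
qed

lemma line_stab_subset_S: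
  assumes u32: "\<And>t. transvection I3 I2 t \<in> S"
  shows "line_stab G I1 \<subseteq> S"
proof
  have pivot22: "g \<in> S" if g: "g \<in> G" "g$I2$I1 = 0" "g$I3$I1 = 0" "g$I2$I2 \<noteq> 0" for g
  proof -
    let ?u = "transvection I3 I2 (- (g$I3$I2 * inverse (g$I2$I2)))"
    have "?u ** g \<in> S"
      using g by (intro upper_triangular_mem_S mult_mem transvection_mem)
        (simp_all add: transvection_matrix_mult_entry inverse_mult_cancel_right)
    then show ?thesis using S_cancel_left[OF u32 g(1)] by blast
  qed
  fix g
  assume "g \<in> line_stab G I1"
  then have g: "g \<in> G" and z: "g$I2$I1 = 0" "g$I3$I1 = 0"
    by (auto simp: line_stab_def)
  show "g \<in> S"
  proof (cases "g$I2$I2 = 0")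
    case True
    then have "g$I3$I2 \<noteq> 0" using lower_left_block_not_mem[OF g z] by blast
    then have "transvection I2 I3 1 ** g \<in> S"
      using z True g
      by (intro pivot22 mult_mem transvection_mem) (simp_all add: transvection_matrix_mult_entry)
    then show ?thesis using S_cancel_left[OF transvection23_mem_S g] by blast
  qed (use pivot22 g z in blast)
qed

lemma G_subset_S:
  assumes u32: "\<And>t. transvection I3 I2 t \<in> S" and u21: "\<And>t. transvection I2 I1 t \<in> S"
  shows "G \<subseteq> S"
proof
  have pivot11: "g \<in> S" if g: "g \<in> G" "g$I1$I1 \<noteq> 0" for g
  proof -
    let ?u = "transvection I3 I1 (- (g$I3$I1 * inverse (g$I1$I1)))"
      and ?v = "transvection I2 I1 (- (g$I2$I1 * inverse (g$I1$I1)))"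
    have "?u ** (?v ** g) \<in> line_stab G I1"
      using g by (simp add: line_stab_def all_ix mult_mem transvection_mem
          transvection_matrix_mult_entry inverse_mult_cancel_right)
    then have "?v ** g \<in> S"
      using line_stab_subset_S[OF u32] S_cancel_left[OF transvection31_mem_S_if_32_21[OF u32 u21]]
        mult_mem[OF transvection_mem g(1)] by auto
    then show ?thesis using S_cancel_left[OF u21 g(1)] by blast
  qed
  fix g
  assume g: "g \<in> G"
  consider "g$I1$I1 \<noteq> 0" | "g$I1$I1 = 0" "g$I2$I1 \<noteq> 0" | "g$I1$I1 = 0" "g$I3$I1 \<noteq> 0"
    using zero_col_not_mem[OF g, of I1] by (auto simp: all_ix)
  then show "g \<in> S"
  proof cases
    case 1
    then show ?thesis using pivot11 g by blast
  next
    case 2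
    then have "transvection I1 I2 1 ** g \<in> S"
      using g by (intro pivot11 mult_mem transvection_mem) (simp_all add:
        transvection_matrix_mult_entry)
    then show ?thesis using S_cancel_left[OF transvection12_mem_S g] by blast
  next
    case 3
    then have "transvection I1 I3 1 ** g \<in> S"
      using g by (intro pivot11 mult_mem transvection_mem) (simp_all add:
        transvection_matrix_mult_entry)
    then show ?thesis using S_cancel_left[OF transvection13_mem_S g] by blast
  qed
qed


lemma transvection_mem_S_by_conj:
  assumes y: "y \<in> S" and ij: "\<And>t. transvection i j t \<in> S"
    and conj: "\<And>t. y ** transvection i j t ** matrix_inv y = transvection k l (p * t * q)"
    and p: "p \<noteq> 0" and q: "q \<noteq> 0"
  shows "transvection k l s \<in> S"
proof -
  have "transvection k l (p * (inverse p * s * inverse q) * q) \<in> S"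
    unfolding conj[symmetric] by (intro S_mult S_matrix_inv y ij)
  moreover have "p * (inverse p * s * inverse q) * q = s"
    using p q by (simp add: mult.assoc mult_inverse_cancel_left)
  ultimately show ?thesis
    by simp
qed

lemma transvections_from_monomial_swap13:
  assumes y: "y \<in> S" "y = mk_mat3 0 0 d 0 c 0 a 0 0" and nz: "a \<noteq> 0" "c \<noteq> 0" "d \<noteq> 0"
  shows "transvection I3 I2 s \<in> S" "transvection I2 I1 s \<in> S"
proof -
  have inv: "matrix_inv y = mk_mat3 0 0 (inverse a) 0 (inverse c) 0 (inverse d) 0 0"
    by (rule matrix_inv_eqI[OF S_imp_mem[OF y(1)]])
      (simp add: y(2) mk_mat3_mult mat1_eq_mk_mat3 right_inverse nz)
  show "transvection I3 I2 s \<in> S"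
    using nz
    by (intro transvection_mem_S_by_conj[OF y(1) transvection12_mem_S,
          where p = a and q = "inverse c"])
      (simp_all only: inv, simp_all add: y(2) transvection_eq_mk_mat3 mk_mat3_mult right_inverse)
  show "transvection I2 I1 s \<in> S"
    using nz
    by (intro transvection_mem_S_by_conj[OF y(1) transvection23_mem_S,
          where p = c and q = "inverse d"])
      (simp_all only: inv, simp_all add: y(2) transvection_eq_mk_mat3 mk_mat3_mult right_inverse)
qed

lemma transvections_from_monomial_cycle132:
  assumes y: "y \<in> S" "y = mk_mat3 0 b 0 0 0 f a 0 0" and nz: "a \<noteq> 0" "b \<noteq> 0" "f \<noteq> 0"
  shows "transvection I3 I1 s \<in> S"
proof -
  have inv: "matrix_inv y = mk_mat3 0 0 (inverse a) (inverse b) 0 0 0 (inverse f) 0"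
    by (rule matrix_inv_eqI[OF S_imp_mem[OF y(1)]])
      (simp add: y(2) mk_mat3_mult mat1_eq_mk_mat3 right_inverse nz)
  show "transvection I3 I1 s \<in> S"
    using nz
    by (intro transvection_mem_S_by_conj[OF y(1) transvection12_mem_S,
          where p = a and q = "inverse b"])
      (simp_all only: inv, simp_all add: y(2) transvection_eq_mk_mat3 mk_mat3_mult right_inverse)
qed

lemma transvections_from_monomial_cycle123:
  assumes y: "y \<in> S" "y = mk_mat3 0 0 d c 0 0 0 a 0" and nz: "a \<noteq> 0" "c \<noteq> 0" "d \<noteq> 0"
  shows "transvection I3 I1 s \<in> S" "transvection I2 I1 s \<in> S"
proof -
  have inv: "matrix_inv y = mk_mat3 0 (inverse c) 0 0 0 (inverse a) (inverse d) 0 0"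
    by (rule matrix_inv_eqI[OF S_imp_mem[OF y(1)]])
      (simp add: y(2) mk_mat3_mult mat1_eq_mk_mat3 right_inverse nz)
  show "transvection I3 I1 s \<in> S"
    using nz
    by (intro transvection_mem_S_by_conj[OF y(1) transvection23_mem_S,
          where p = a and q = "inverse d"])
      (simp_all only: inv, simp_all add: y(2) transvection_eq_mk_mat3 mk_mat3_mult right_inverse)
  show "transvection I2 I1 s \<in> S"
    using nz
    by (intro transvection_mem_S_by_conj[OF y(1) transvection13_mem_S,
          where p = c and q = "inverse d"])
      (simp_all only: inv, simp_all add: y(2) transvection_eq_mk_mat3 mk_mat3_mult right_inverse)
qed

lemma transvections_from_monomial_swap23:
  assumes y: "y \<in> S" "y = mk_mat3 b 0 0 0 0 f 0 a 0" and nz: "a \<noteq> 0" "b \<noteq> 0" "f \<noteq> 0"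
  shows "transvection I3 I2 s \<in> S"
proof -
  have inv: "matrix_inv y = mk_mat3 (inverse b) 0 0 0 0 (inverse a) 0 (inverse f) 0"
    by (rule matrix_inv_eqI[OF S_imp_mem[OF y(1)]])
      (simp add: y(2) mk_mat3_mult mat1_eq_mk_mat3 right_inverse nz)
  show "transvection I3 I2 s \<in> S"
    using nz
    by (intro transvection_mem_S_by_conj[OF y(1) transvection23_mem_S,
          where p = a and q = "inverse f"])
      (simp_all only: inv, simp_all add: y(2) transvection_eq_mk_mat3 mk_mat3_mult right_inverse)
qed

lemma transvections_from_monomial_swap12:
  assumes y: "y \<in> S" "y = mk_mat3 0 b 0 a 0 0 0 0 f" and nz: "a \<noteq> 0" "b \<noteq> 0" "f \<noteq> 0"
  shows "transvection I2 I1 s \<in> S"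
proof -
  have inv: "matrix_inv y = mk_mat3 0 (inverse a) 0 (inverse b) 0 0 0 0 (inverse f)"
    by (rule matrix_inv_eqI[OF S_imp_mem[OF y(1)]])
      (simp add: y(2) mk_mat3_mult mat1_eq_mk_mat3 right_inverse nz)
  show "transvection I2 I1 s \<in> S"
    using nz
    by (intro transvection_mem_S_by_conj[OF y(1) transvection12_mem_S,
          where p = a and q = "inverse b"])
      (simp_all only: inv, simp_all add: y(2) transvection_eq_mk_mat3 mk_mat3_mult right_inverse)
qed

lemma zero_row_not_in_S: "y \<in> S \<Longrightarrow> y$r$I1 = 0 \<Longrightarrow> y$r$I2 = 0 \<Longrightarrow> y$r$I3 = 0 \<Longrightarrow> False"
  using zero_row_not_mem[OF S_imp_mem, of y r] by (auto simp: all_ix)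
lemma zero_col_not_in_S: "y \<in> S \<Longrightarrow> y$I1$c = 0 \<Longrightarrow> y$I2$c = 0 \<Longrightarrow> y$I3$c = 0 \<Longrightarrow> False"
  using zero_col_not_mem[OF S_imp_mem, of y c] by (auto simp: all_ix)

text \<open>Multiplying \<open>x\<close> on both sides by upper unitriangular matrices yields a monomial matrix
  in \<open>S\<close>, and conjugating upper transvections by it produces lower ones.\<close>

lemma transvections_if_entry31:
  assumes x: "x \<in> S" and a: "x$I3$I1 \<noteq> 0"
  shows "transvection I3 I2 s \<in> S \<and> transvection I2 I1 s \<in> S"
proof -
  define y1 where
    "y1 = x ** transvection I1 I2 (- (inverse (x$I3$I1) * x$I3$I2))
      ** transvection I1 I3 (- (inverse (x$I3$I1) * x$I3$I3))"
  have y1S: "y1 \<in> S" unfolding y1_def by (intro S_mult x transvection12_mem_S transvection13_mem_S)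
  have y1e: "y1$I3$I1 = x$I3$I1" "y1$I3$I2 = 0" "y1$I3$I3 = 0"
    by (simp_all add: y1_def matrix_mult_transvection_entry mult_inverse_cancel_left a)
  define y2 where
    "y2 = transvection I1 I3 (- (y1$I1$I1 * inverse (x$I3$I1)))
      ** (transvection I2 I3 (- (y1$I2$I1 * inverse (x$I3$I1))) ** y1)"
  have y2S: "y2 \<in> S" unfolding y2_def
    by (intro S_mult y1S transvection13_mem_S transvection23_mem_S)
  have y2e: "y2$I1$I1 = 0" "y2$I2$I1 = 0" "y2$I3$I1 = x$I3$I1" "y2$I3$I2 = 0" "y2$I3$I3 = 0"
    by (simp_all add: y2_def transvection_matrix_mult_entry y1e inverse_mult_cancel_right a)
  show ?thesis
  proof (cases "y2$I2$I2 = 0")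
    case False
    define c where "c = y2$I2$I2"
    have c: "c \<noteq> 0" using False by (simp add: c_def)
    define y3 where
      "y3 = transvection I1 I2 (- (y2$I1$I2 * inverse c))
        ** (y2 ** transvection I2 I3 (- (inverse c * y2$I2$I3)))"
    have y3S: "y3 \<in> S" unfolding y3_def
      by (intro S_mult y2S transvection12_mem_S transvection23_mem_S)
    have y3e: "y3$I1$I1 = 0" "y3$I1$I2 = 0" "y3$I2$I1 = 0" "y3$I2$I2 = c" "y3$I2$I3 = 0"
       "y3$I3$I1 = x$I3$I1" "y3$I3$I2 = 0" "y3$I3$I3 = 0"
      by (simp_all add: y3_def transvection_matrix_mult_entry matrix_mult_transvection_entry y2e
        c_def[symmetric] inverse_mult_cancel_right mult_inverse_cancel_left c)
    have d: "y3$I1$I3 \<noteq> 0" using zero_row_not_in_S[OF y3S, of I1] y3e by auto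
    have "y3 = mk_mat3 0 0 (y3$I1$I3) 0 c 0 (x$I3$I1) 0 0"
      by (subst mat3_eq_mk_mat3) (simp add: y3e)
    then show ?thesis using transvections_from_monomial_swap13[OF y3S _ a c d] by blast
  next
    case True
    have b: "y2$I1$I2 \<noteq> 0" using zero_col_not_in_S[OF y2S, of I2] y2e True by auto
    have f: "y2$I2$I3 \<noteq> 0" using zero_row_not_in_S[OF y2S, of I2] y2e True by auto
    define y3 where "y3 = transvection I1 I2 (-(y2$I1$I3 * inverse (y2$I2$I3))) ** y2"
    have y3S: "y3 \<in> S" unfolding y3_def by (intro S_mult y2S transvection12_mem_S)
    have "y3 = mk_mat3 0 (y2$I1$I2) 0 0 0 (y2$I2$I3) (x$I3$I1) 0 0"
      by (subst mat3_eq_mk_mat3) (simp add: y3_def transvection_matrix_mult_entry y2e True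
        inverse_mult_cancel_right f)
    then have "transvection I3 I1 t \<in> S" for t using transvections_from_monomial_cycle132[OF y3S _ a b f]
      by blast
    then show ?thesis using transvection32_mem_S_if_31 transvection21_mem_S_if_31 by blast
  qed
qed

lemma transvection32_if_entry32:
  assumes x: "x \<in> S" and z: "x$I3$I1 = 0" and a: "x$I3$I2 \<noteq> 0"
  shows "transvection I3 I2 s \<in> S"
proof -
  define y1 where "y1 = x ** transvection I2 I3 (-(inverse (x$I3$I2) * x$I3$I3))"
  have y1S: "y1 \<in> S" unfolding y1_def by (intro S_mult x transvection23_mem_S)
  have y1e: "y1$I3$I1 = 0" "y1$I3$I2 = x$I3$I2" "y1$I3$I3 = 0"
    by (simp_all add: y1_def matrix_mult_transvection_entry mult_inverse_cancel_left a z)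
  define y2 where
    "y2 = transvection I1 I3 (- (y1$I1$I2 * inverse (x$I3$I2)))
      ** (transvection I2 I3 (- (y1$I2$I2 * inverse (x$I3$I2))) ** y1)"
  have y2S: "y2 \<in> S" unfolding y2_def
    by (intro S_mult y1S transvection13_mem_S transvection23_mem_S)
  have y2e: "y2$I1$I2 = 0" "y2$I2$I2 = 0" "y2$I3$I1 = 0" "y2$I3$I2 = x$I3$I2" "y2$I3$I3 = 0"
    by (simp_all add: y2_def transvection_matrix_mult_entry y1e inverse_mult_cancel_right a)
  show ?thesis
  proof (cases "y2$I2$I1 = 0")
    case False
    define c where "c = y2$I2$I1"
    have c: "c \<noteq> 0" using False by (simp add: c_def)
    define y3 where
      "y3 = transvection I1 I2 (- (y2$I1$I1 * inverse c))
        ** (y2 ** transvection I1 I3 (- (inverse c * y2$I2$I3)))"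
    have y3S: "y3 \<in> S" unfolding y3_def
      by (intro S_mult y2S transvection12_mem_S transvection13_mem_S)
    have y3e: "y3$I1$I1 = 0" "y3$I1$I2 = 0" "y3$I2$I1 = c" "y3$I2$I2 = 0" "y3$I2$I3 = 0"
       "y3$I3$I1 = 0" "y3$I3$I2 = x$I3$I2" "y3$I3$I3 = 0"
      by (simp_all add: y3_def transvection_matrix_mult_entry matrix_mult_transvection_entry y2e
        c_def[symmetric] inverse_mult_cancel_right mult_inverse_cancel_left c)
    have d: "y3$I1$I3 \<noteq> 0" using zero_row_not_in_S[OF y3S, of I1] y3e by auto
    have "y3 = mk_mat3 0 0 (y3$I1$I3) c 0 0 0 (x$I3$I2) 0"
      by (subst mat3_eq_mk_mat3) (simp add: y3e)
    then have "transvection I3 I1 t \<in> S" for t using transvections_from_monomial_cycle123[OF y3S _ a c d]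
      by blast
    then show ?thesis using transvection32_mem_S_if_31 by blast
  next
    case True
    have b: "y2$I1$I1 \<noteq> 0" using zero_col_not_in_S[OF y2S, of I1] y2e True by auto
    have f: "y2$I2$I3 \<noteq> 0" using zero_row_not_in_S[OF y2S, of I2] y2e True by auto
    define y3 where "y3 = y2 ** transvection I1 I3 (-(inverse (y2$I1$I1) * y2$I1$I3))"
    have y3S: "y3 \<in> S" unfolding y3_def by (intro S_mult y2S transvection13_mem_S)
    have "y3 = mk_mat3 (y2$I1$I1) 0 0 0 0 (y2$I2$I3) 0 (x$I3$I2) 0"
      by (subst mat3_eq_mk_mat3) (simp add: y3_def matrix_mult_transvection_entry y2e True
        mult_inverse_cancel_left b)
    then show ?thesis using transvections_from_monomial_swap23[OF y3S _ a b f] by blast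
  qed
qed

lemma transvection21_if_entry21:
  assumes x: "x \<in> S" and z: "x$I3$I1 = 0" and a: "x$I2$I1 \<noteq> 0"
  shows "transvection I2 I1 s \<in> S"
proof -
  define y1 where
    "y1 = x ** transvection I1 I2 (- (inverse (x$I2$I1) * x$I2$I2))
      ** transvection I1 I3 (- (inverse (x$I2$I1) * x$I2$I3))"
  have y1S: "y1 \<in> S" unfolding y1_def by (intro S_mult x transvection12_mem_S transvection13_mem_S)
  have y1e: "y1$I2$I1 = x$I2$I1" "y1$I2$I2 = 0" "y1$I2$I3 = 0" "y1$I3$I1 = 0"
    by (simp_all add: y1_def matrix_mult_transvection_entry mult_inverse_cancel_left a z)
  define y2 where "y2 = transvection I1 I2 (-(y1$I1$I1 * inverse (x$I2$I1))) ** y1"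
  have y2S: "y2 \<in> S" unfolding y2_def by (intro S_mult y1S transvection12_mem_S)
  have y2e: "y2$I1$I1 = 0" "y2$I2$I1 = x$I2$I1" "y2$I2$I2 = 0" "y2$I2$I3 = 0" "y2$I3$I1 = 0"
    by (simp_all add: y2_def transvection_matrix_mult_entry y1e inverse_mult_cancel_right a)
  show ?thesis
  proof (cases "y2$I3$I2 = 0")
    case False
    define c where "c = y2$I3$I2"
    have c: "c \<noteq> 0" using False by (simp add: c_def)
    define y3 where
      "y3 = transvection I1 I3 (- (y2$I1$I2 * inverse c))
        ** (y2 ** transvection I2 I3 (- (inverse c * y2$I3$I3)))"
    have y3S: "y3 \<in> S" unfolding y3_def
      by (intro S_mult y2S transvection13_mem_S transvection23_mem_S)
    have y3e: "y3$I1$I1 = 0" "y3$I1$I2 = 0" "y3$I2$I1 = x$I2$I1" "y3$I2$I2 = 0" "y3$I2$I3 = 0"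
       "y3$I3$I1 = 0" "y3$I3$I2 = c" "y3$I3$I3 = 0"
      by (simp_all add: y3_def transvection_matrix_mult_entry matrix_mult_transvection_entry y2e
        c_def[symmetric] inverse_mult_cancel_right mult_inverse_cancel_left c)
    have d: "y3$I1$I3 \<noteq> 0" using zero_row_not_in_S[OF y3S, of I1] y3e by auto
    have "y3 = mk_mat3 0 0 (y3$I1$I3) (x$I2$I1) 0 0 0 c 0"
      by (subst mat3_eq_mk_mat3) (simp add: y3e)
    then show ?thesis using transvections_from_monomial_cycle123[OF y3S _ c a d] by blast
  next
    case True
    have b: "y2$I1$I2 \<noteq> 0" using zero_col_not_in_S[OF y2S, of I2] y2e True by auto
    have f: "y2$I3$I3 \<noteq> 0" using zero_row_not_in_S[OF y2S, of I3] y2e True by auto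
    define y3 where "y3 = transvection I1 I3 (-(y2$I1$I3 * inverse (y2$I3$I3))) ** y2"
    have y3S: "y3 \<in> S" unfolding y3_def by (intro S_mult y2S transvection13_mem_S)
    have "y3 = mk_mat3 0 (y2$I1$I2) 0 (x$I2$I1) 0 0 0 0 (y2$I3$I3)"
      by (subst mat3_eq_mk_mat3) (simp add: y3_def transvection_matrix_mult_entry y2e True
        inverse_mult_cancel_right f)
    then show ?thesis using transvections_from_monomial_swap12[OF y3S _ a b f] by blast
  qed
qed

lemma transvection32_if_not_hyperplane_stab:
  "x \<in> S \<Longrightarrow> x \<notin> hyperplane_stab G I3 \<Longrightarrow> transvection I3 I2 s \<in> S"
proof -
  assume x: "x \<in> S" "x \<notin> hyperplane_stab G I3"
  then have "x$I3$I1 \<noteq> 0 \<or> x$I3$I2 \<noteq> 0" using S_imp_mem by (auto simp: hyperplane_stab_def all_ix)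
  then show ?thesis using transvections_if_entry31[OF x(1)] transvection32_if_entry32[OF x(1)]
    by blast
qed

lemma transvection21_if_not_line_stab: "x \<in> S \<Longrightarrow> x \<notin> line_stab G I1 \<Longrightarrow> transvection I2 I1 s \<in> S"
proof -
  assume x: "x \<in> S" "x \<notin> line_stab G I1"
  then have "x$I3$I1 \<noteq> 0 \<or> x$I2$I1 \<noteq> 0" using S_imp_mem by (auto simp: line_stab_def all_ix)
  then show ?thesis using transvections_if_entry31[OF x(1)] transvection21_if_entry21[OF x(1)]
    by blast
qed

lemma subset_stab_or_eq: "S \<subseteq> hyperplane_stab G I3 \<or> S \<subseteq> line_stab G I1 \<or> S = G"
proof (rule ccontr)
  assume h: "\<not> (S \<subseteq> hyperplane_stab G I3 \<or> S \<subseteq> line_stab G I1 \<or> S = G)"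
  then obtain x x' where x: "x \<in> S" "x \<notin> hyperplane_stab G I3"
    and x': "x' \<in> S" "x' \<notin> line_stab G I1" by blast
  have "G \<subseteq> S"
    using G_subset_S[OF transvection32_if_not_hyperplane_stab[OF x]
      transvection21_if_not_line_stab[OF x']] by blast
  then show False using h S_imp_mem by blast
qed

end

context transvection_group begin

lemma min_parabolic_overgroup_cases:
  assumes "is_subgroup G S" "min_parabolic G \<subseteq> S"
  shows "S \<subseteq> hyperplane_stab G I3 \<or> S \<subseteq> line_stab G I1 \<or> S = G"
proof -
  interpret min_parabolic_overgroup G S
    using assms by unfold_locales
  show ?thesis
    by (rule subset_stab_or_eq)
qed

end

section \<open>The group \<open>H\<close>\<close>

definition sigma_fixed :: "('a::{ring_1,conjugation}) mat3 set \<Rightarrow> 'a mat3 set" where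
  "sigma_fixed G = {g \<in> G. sigma g = g}"

lemma Hgrp_eq_component: "Hgrp G = connected_component_set (sigma_fixed G) (mat 1)"
  by (simp add: Hgrp_def sigma_fixed_def)

lemma continuous_on_mk_mat3:
  assumes "continuous_on S f11" "continuous_on S f12" "continuous_on S f13"
    "continuous_on S f21" "continuous_on S f22" "continuous_on S f23"
    "continuous_on S f31" "continuous_on S f32" "continuous_on S f33"
  shows "continuous_on S (\<lambda>t. mk_mat3 (f11 t) (f12 t) (f13 t) (f21 t) (f22 t) (f23 t)
    (f31 t) (f32 t) (f33 t))"
  unfolding mk_mat3_def
proof (intro continuous_on_vec_lambda)
  fix i j
  show "continuous_on S (\<lambda>t. case i of
      I1 \<Rightarrow> (case j of I1 \<Rightarrow> f11 t | I2 \<Rightarrow> f12 t | I3 \<Rightarrow> f13 t)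
    | I2 \<Rightarrow> (case j of I1 \<Rightarrow> f21 t | I2 \<Rightarrow> f22 t | I3 \<Rightarrow> f23 t)
    | I3 \<Rightarrow> (case j of I1 \<Rightarrow> f31 t | I2 \<Rightarrow> f32 t | I3 \<Rightarrow> f33 t))"
    by (cases i; cases j) (simp_all add: assms)
qed

context transvection_group begin

lemma continuous_on_matrix_mult_left: "continuous_on UNIV (\<lambda>x. (a :: 'a mat3) ** (x :: 'a mat3))"
proof -
  have e: "(\<lambda>x. (a :: 'a mat3) ** (x :: 'a mat3)) =
      (\<lambda>x. \<chi> i j. a$i$I1 * x$I1$j + a$i$I2 * x$I2$j + a$i$I3 * x$I3$j)"
    by (simp add: fun_eq_iff vec_eq_iff matrix_mult_mat3_entry)
  show ?thesis unfolding e
    by (intro continuous_on_vec_lambda continuous_intros continuous_on_component)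
qed

lemma sigma_fixed_mult: "a \<in> sigma_fixed G \<Longrightarrow> b \<in> sigma_fixed G \<Longrightarrow> a ** b \<in> sigma_fixed G"
  by (simp add: sigma_fixed_def mult_mem sigma_mult)
lemma sigma_fixed_matrix_inv: "a \<in> sigma_fixed G \<Longrightarrow> matrix_inv a \<in> sigma_fixed G"
  by (simp add: sigma_fixed_def inv_mem sigma_matrix_inv)
lemma sigma_fixed_mat1: "mat 1 \<in> sigma_fixed G"
  by (simp add: sigma_fixed_def one_mem)

lemma H_subset_sigma_fixed: "h \<in> Hgrp G \<Longrightarrow> h \<in> sigma_fixed G"
  using connected_component_subset by (auto simp: Hgrp_eq_component)

lemma H_mem: "h \<in> Hgrp G \<Longrightarrow> h \<in> G"
  using H_subset_sigma_fixed by (simp add: sigma_fixed_def)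

lemma mat1_H: "mat 1 \<in> Hgrp G"
  by (simp add: Hgrp_eq_component sigma_fixed_mat1 connected_component_refl)

lemma H_left_translate:
  assumes x: "x \<in> sigma_fixed G" and c: "c \<in> Hgrp G" "x ** c \<in> Hgrp G" and h: "h \<in> Hgrp G"
  shows "x ** h \<in> Hgrp G"
proof -
  let ?T = "(\<lambda>y. x ** y) ` Hgrp G"
  have "connected ?T"
    unfolding Hgrp_eq_component
    by (rule connected_continuous_image[OF continuous_on_subset[OF continuous_on_matrix_mult_left]])
      auto
  moreover have "?T \<subseteq> sigma_fixed G"
    using H_subset_sigma_fixed sigma_fixed_mult[OF x] by blast
  moreover have "x ** c \<in> ?T"
    using c by blast
  ultimately have "?T \<subseteq> connected_component_set (sigma_fixed G) (x ** c)"
    by (rule connected_component_maximal[rotated])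
  also have "\<dots> = Hgrp G"
    using c(2) by (simp add: Hgrp_eq_component connected_component_eq)
  finally show ?thesis
    using h by blast
qed

lemma H_mult: "a \<in> Hgrp G \<Longrightarrow> b \<in> Hgrp G \<Longrightarrow> a ** b \<in> Hgrp G"
  using H_left_translate[of a "mat 1" b] H_subset_sigma_fixed mat1_H by simp

lemma H_matrix_inv: "a \<in> Hgrp G \<Longrightarrow> matrix_inv a \<in> Hgrp G"
  using H_left_translate[of "matrix_inv a" a "mat 1"] H_subset_sigma_fixed mat1_H
  by (simp add: sigma_fixed_matrix_inv matrix_inv_mult H_mem)

lemma path_end_H:
  assumes c: "continuous_on {0..1::real} p" and S: "\<And>t. t \<in> {0..1} \<Longrightarrow> p t \<in> sigma_fixed G"
    and p0: "p 0 = mat 1"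
  shows "p 1 \<in> Hgrp G"
proof -
  have "p ` {0..1} \<subseteq> connected_component_set (sigma_fixed G) (mat 1)"
    by (rule connected_component_maximal) (use c S p0 in \<open>auto intro!: connected_continuous_image
      image_eqI[of _ _ 0]\<close>)
  moreover have "p 1 \<in> p ` {0..1}" by auto
  ultimately show ?thesis unfolding Hgrp_eq_component by blast
qed

lemma sigma_fixed_Jform: "h \<in> sigma_fixed G \<Longrightarrow> ctrans h ** Jmat ** h = Jmat"
proof -
  assume h: "h \<in> sigma_fixed G"
  then have hG: "h \<in> G" and s: "Jmat ** ctrans (matrix_inv h) ** Jmat = h"
    by (auto simp: sigma_fixed_def sigma_def theta_def)
  have "ctrans h ** Jmat ** h = ctrans h ** Jmat ** (Jmat ** ctrans (matrix_inv h) ** Jmat)"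
    by (simp add: s)
  also have "\<dots> = ctrans (matrix_inv h ** h) ** Jmat"
    by (simp add: matrix_mul_assoc ctrans_mult)
  finally show ?thesis by (simp add: matrix_inv_mult hG)
qed

lemma sigma_fixed_iff: "h \<in> sigma_fixed G \<longleftrightarrow> h \<in> G \<and> ctrans h ** Jmat ** h = Jmat"
proof (intro iffI conjI)
  assume h: "h \<in> G \<and> ctrans h ** Jmat ** h = Jmat"
  have "Jmat ** ctrans h ** Jmat ** h = Jmat ** (ctrans h ** Jmat ** h)"
    by (simp add: matrix_mul_assoc)
  then have "Jmat ** ctrans h ** Jmat ** h = mat 1"
    using h by simp
  then have "matrix_inv h = Jmat ** ctrans h ** Jmat"
    using h by (simp add: matrix_inv_eqI_left)
  then show "h \<in> sigma_fixed G"
    using h by (simp add: sigma_fixed_def sigma_def theta_def ctrans_mult matrix_mul_assoc)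
qed (auto simp: sigma_fixed_def sigma_fixed_Jform)

lemma H_Jform: "h \<in> Hgrp G \<Longrightarrow> ctrans h ** Jmat ** h = Jmat"
  using H_subset_sigma_fixed sigma_fixed_Jform by blast

end

definition sl2_block :: "ix \<Rightarrow> ix \<Rightarrow> 'a \<Rightarrow> 'a \<Rightarrow> 'a \<Rightarrow> 'a \<Rightarrow> 'a::ring_1 mat3" where
  "sl2_block i j a b c d = (\<chi> k l.
     if k = i \<and> l = i then a else if k = i \<and> l = j then b
     else if k = j \<and> l = i then c else if k = j \<and> l = j then d
     else if k = l then 1 else 0)"

lemma transvection_triple_eq_sl2_block:
  fixes g :: "'a::star_div_algebra" and r :: real
  assumes ij: "i \<noteq> j" and g: "g \<noteq> 0"
  defines "x \<equiv> inverse g * (of_real r - 1)"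
  shows "transvection i j x ** transvection j i g ** transvection i j x =
    sl2_block i j (of_real r) (inverse g * (of_real (r * r) - 1)) g (of_real r)"
proof -
  have x: "x = (of_real r - 1) * inverse g"
    by (simp add: x_def algebra_simps of_real_commute)
  have xg: "1 + x * g = of_real r"
    using g by (simp add: x inverse_mult_cancel_right)
  have gx: "g * x + 1 = of_real r"
    using g by (simp add: x_def mult_inverse_cancel_left)
  have "(1 + x * g) * x + x = inverse g * (of_real r * (of_real r - 1) + (of_real r - 1))"
    unfolding xg unfolding x_def by (simp only: of_real_left_commute distrib_left)
  also have "\<dots> = inverse g * (of_real (r * r) - 1)"
    by (simp add: algebra_simps)
  finally have corner: "(1 + x * g) * x + x = inverse g * (of_real (r * r) - 1)" .
  with ij xg gx show ?thesis
    by (auto simp: vec_eq_iff sl2_block_def matrix_mult_transvection_entry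
        transvection_matrix_mult_entry transvection_entry add.commute)
qed

definition rotation :: "'a::star_div_algebra \<Rightarrow> 'a mat3" where
  "rotation g =
    sl2_block I2 I3 (of_real (sqrt (1 - normsq g))) (- conjf g) g (of_real (sqrt (1 - normsq g)))"

definition boost :: "'a::star_div_algebra \<Rightarrow> 'a mat3" where
  "boost b =
    sl2_block I1 I3 (of_real (sqrt (1 + normsq b))) (conjf b) b (of_real (sqrt (1 + normsq b)))"

lemma rotation_eq_mk_mat3:
  "rotation g =
    mk_mat3 1 0 0 0 (of_real (sqrt (1 - normsq g))) (- conjf g) 0 g (of_real (sqrt (1 - normsq g)))"
  by (simp add: mat3_eq_iff rotation_def sl2_block_def)

lemma boost_eq_mk_mat3:
  "boost b =
    mk_mat3 (of_real (sqrt (1 + normsq b))) 0 (conjf b) 0 1 0 b 0 (of_real (sqrt (1 + normsq b)))"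
  by (simp add: mat3_eq_iff boost_def sl2_block_def)

lemma rotation_0: "rotation 0 = mat 1"
  by (simp add: rotation_eq_mk_mat3 mat1_eq_mk_mat3)

lemma boost_0: "boost 0 = mat 1"
  by (simp add: boost_eq_mk_mat3 mat1_eq_mk_mat3)

lemma rotation_form:
  fixes g :: "'a::star_div_algebra"
  assumes "normsq g \<le> 1"
  shows "ctrans (rotation g) ** Jmat ** rotation g = Jmat"
proof -
  define c where "c = (of_real (sqrt (1 - normsq g)) :: 'a)"
  have cc: "conjf g * g = 1 - c * c" "g * conjf g = 1 - c * c"
    using assms by (simp_all add: c_def conj_mult_self mult_conj_self flip: of_real_mult)
  have comm: "conjf g * c = c * conjf g" "g * c = c * g"
    by (simp_all add: c_def of_real_commute)
  have "conjf c = c"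
    by (simp add: c_def)
  moreover have "rotation g = mk_mat3 1 0 0 0 c (- conjf g) 0 g c"
    by (simp add: rotation_eq_mk_mat3 c_def)
  ultimately show ?thesis
    by (simp add: ctrans_mk_mat3 Jmat_eq_mk_mat3 mk_mat3_mult conj_minus c_def[symmetric])
      (simp add: cc comm algebra_simps)
qed

lemma boost_form: "ctrans (boost b) ** Jmat ** boost (b :: 'a::star_div_algebra) = Jmat"
proof -
  define c where "c = (of_real (sqrt (1 + normsq b)) :: 'a)"
  have cc: "conjf b * b = c * c - 1" "b * conjf b = c * c - 1"
    using normsq_nonneg[of b]
    by (simp_all add: c_def conj_mult_self mult_conj_self flip: of_real_mult)
  have comm: "conjf b * c = c * conjf b" "b * c = c * b"
    by (simp_all add: c_def of_real_commute)
  have "conjf c = c"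
    by (simp add: c_def)
  moreover have "boost b = mk_mat3 c 0 (conjf b) 0 1 0 b 0 c"
    by (simp add: boost_eq_mk_mat3 c_def)
  ultimately show ?thesis
    by (simp add: ctrans_mk_mat3 Jmat_eq_mk_mat3 mk_mat3_mult c_def[symmetric])
      (simp add: cc comm algebra_simps)
qed

context transvection_group begin

lemma sl2_block_mem:
  "i \<noteq> j \<Longrightarrow> g \<noteq> 0 \<Longrightarrow> sl2_block i j (of_real r) (inverse g * (of_real (r * r) - 1)) g (of_real r) \<in> G"
  by (metis transvection_triple_eq_sl2_block mult_mem transvection_mem)

lemma rotation_mem:
  assumes "normsq g \<le> 1"
  shows "rotation g \<in> G"
proof (cases "g = 0")
  case False
  have "inverse g * (of_real (sqrt (1 - normsq g) * sqrt (1 - normsq g)) - 1) = - conjf g"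
    using assms False by (simp add: inverse_mult_cancel_left flip: mult_conj_self)
  then show ?thesis
    using sl2_block_mem[of I2 I3 g "sqrt (1 - normsq g)"] False by (simp add: rotation_def)
qed (simp add: rotation_0 one_mem)

lemma boost_mem: "boost b \<in> G"
proof (cases "b = 0")
  case False
  have "inverse b * (of_real (sqrt (1 + normsq b) * sqrt (1 + normsq b)) - 1) = conjf b"
    using normsq_nonneg[of b] False by (simp add: inverse_mult_cancel_left flip: mult_conj_self)
  then show ?thesis
    using sl2_block_mem[of I1 I3 b "sqrt (1 + normsq b)"] False by (simp add: boost_def)
qed (simp add: boost_0 one_mem)

lemma rotation_in_H:
  assumes "normsq g \<le> 1"
  shows "rotation g \<in> Hgrp G"
proof -
  have "rotation (of_real 1 * g) \<in> Hgrp G"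
  proof (rule path_end_H)
    show "continuous_on {0..1} (\<lambda>t. rotation (of_real t * g))"
      by (simp add: rotation_eq_mk_mat3 normsq_mult conj_of_real_mult)
        (intro continuous_on_mk_mat3 continuous_intros)
    show "rotation (of_real t * g) \<in> sigma_fixed G" if "t \<in> {0..1}" for t
    proof -
      have "normsq (of_real t * g) \<le> 1"
        using that assms normsq_nonneg[of g] by (simp add: normsq_mult mult_le_one)
      then show ?thesis
        by (simp add: sigma_fixed_iff rotation_mem rotation_form)
    qed
  qed (simp add: rotation_0)
  then show ?thesis by simp
qed

lemma boost_in_H: "boost b \<in> Hgrp G"
proof -
  have "boost (of_real 1 * b) \<in> Hgrp G"
  proof (rule path_end_H)
    show "continuous_on {0..1} (\<lambda>t. boost (of_real t * b))"
      by (simp add: boost_eq_mk_mat3 normsq_mult conj_of_real_mult)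
        (intro continuous_on_mk_mat3 continuous_intros)
    show "boost (of_real t * b) \<in> sigma_fixed G" for t
      by (simp add: sigma_fixed_iff boost_mem boost_form)
  qed (simp add: boost_0)
  then show ?thesis by simp
qed

end

lemma unit_phase_exists:
  fixes v :: "'a::star_div_algebra"
  shows "\<exists>\<mu>. normsq \<mu> = 1 \<and> v * \<mu> = of_real (sqrt (normsq v))"
proof (cases "v = 0")
  case False
  define n where "n = normsq v"
  have n: "0 < n" using False by (simp add: n_def normsq_pos)
  define \<mu> where "\<mu> = conjf v * of_real (1 / sqrt n)"
  have "normsq \<mu> = n * (1 / sqrt n * (1 / sqrt n))"
    by (simp only: \<mu>_def normsq_mult normsq_conj normsq_of_real n_def)
  also have "\<dots> = 1" using n by (simp add: field_simps)
  finally have "normsq \<mu> = 1" .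
  moreover have "v * \<mu> = of_real (n * (1 / sqrt n))"
    by (simp only: \<mu>_def mult.assoc[symmetric] mult_conj_self n_def of_real_mult)
  moreover have "n * (1 / sqrt n) = sqrt n"
    using n by (simp add: field_simps)
  ultimately show ?thesis by (metis n_def)
qed (auto intro: exI[of _ 1])

lemma exists_rotation_column:
  fixes w :: "'a::star_div_algebra" and s m :: real
  assumes s: "0 \<le> s" and m: "0 < m" and msq: "m * m = normsq w + s * s"
  shows "\<exists>g. normsq g \<le> 1 \<and> - conjf g * of_real m = w \<and> sqrt (1 - normsq g) * m = s"
proof -
  define k where "k = 1 / m"
  define g where "g = - (of_real k * conjf w)"
  have km: "k * m = 1"
    using m by (simp add: k_def)
  have "- conjf g * of_real m = w * of_real (k * m)"
    by (simp add: g_def conj_mult conj_minus mult.assoc)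
  then have "- conjf g * of_real m = w"
    by (simp add: km)
  moreover have ng: "1 - normsq g = (s * k) * (s * k)"
  proof -
    have "normsq g = k * k * (m * m) - (s * k) * (s * k)"
      by (simp add: g_def normsq_mult msq algebra_simps)
    also have "\<dots> = 1 - (s * k) * (s * k)"
      by (metis km mult.assoc mult.commute mult_1_left)
    finally show ?thesis by simp
  qed
  moreover have "0 \<le> (s * k) * (s * k)"
    by simp
  moreover have "sqrt (1 - normsq g) = s * k"
    unfolding ng real_sqrt_abs2 using s m by (simp add: k_def)
  then have "sqrt (1 - normsq g) * m = s"
    by (simp add: mult.assoc km)
  ultimately show ?thesis
    by (metis diff_ge_0_iff_ge)
qed

lemma rotation_boost_col1:
  "(rotation g ** boost b)$I1$I1 = of_real (sqrt (1 + normsq b))"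
  "(rotation g ** boost b)$I2$I1 = - conjf g * b"
  "(rotation g ** boost b)$I3$I1 = of_real (sqrt (1 - normsq g)) * b"
  by (simp_all add: rotation_eq_mk_mat3 boost_eq_mk_mat3 matrix_mult_mat3_entry)

lemma rotation_boost_col3:
  "(rotation g ** boost b)$I1$I3 = conjf b"
  "(rotation g ** boost b)$I2$I3 = - conjf g * of_real (sqrt (1 + normsq b))"
  "(rotation g ** boost b)$I3$I3 = of_real (sqrt (1 - normsq g)) * of_real (sqrt (1 + normsq b))"
  by (simp_all add: rotation_eq_mk_mat3 boost_eq_mk_mat3 matrix_mult_mat3_entry)

lemma rotation_boost_first_column:
  fixes w2 w3 g \<nu> :: "'a::star_div_algebra" and m s :: real
  assumes \<nu>: "\<nu> * conjf \<nu> = 1" "w3 * \<nu> = of_real s"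
    and g: "- conjf g * of_real m = w2 * \<nu>" "sqrt (1 - normsq g) * m = s"
  shows "(rotation g ** boost (of_real m * conjf \<nu>))$I2$I1 = w2"
    "(rotation g ** boost (of_real m * conjf \<nu>))$I3$I1 = w3"
proof -
  have "(rotation g ** boost (of_real m * conjf \<nu>))$I2$I1 = (- conjf g * of_real m) * conjf \<nu>"
    by (simp add: rotation_boost_col1 mult.assoc)
  also have "\<dots> = w2 * (\<nu> * conjf \<nu>)"
    by (simp only: g(1) mult.assoc)
  finally show "(rotation g ** boost (of_real m * conjf \<nu>))$I2$I1 = w2"
    by (simp add: \<nu>(1))
  have "(rotation g ** boost (of_real m * conjf \<nu>))$I3$I1 =
      of_real (sqrt (1 - normsq g) * m) * conjf \<nu>"
    by (simp add: rotation_boost_col1 mult.assoc)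
  also have "\<dots> = w3 * (\<nu> * conjf \<nu>)"
    by (simp only: g(2) \<nu>(2)[symmetric] mult.assoc)
  finally show "(rotation g ** boost (of_real m * conjf \<nu>))$I3$I1 = w3"
    by (simp add: \<nu>(1))
qed

context transvection_group begin

lemma exists_H_third_column:
  fixes v1 v2 v3 :: 'a
  assumes "normsq v1 - normsq v2 - normsq v3 = -1"
  shows "\<exists>h\<in>Hgrp G. \<exists>l. l \<noteq> 0 \<and> h$I1$I3 = v1 * l \<and> h$I2$I3 = v2 * l \<and> h$I3$I3 = v3 * l"
proof -
  obtain \<mu> where \<mu>: "normsq \<mu> = 1" "v3 * \<mu> = of_real (sqrt (normsq v3))"
    using unit_phase_exists by blast
  define s where "s = sqrt (normsq v3)"
  have s: "0 \<le> s" "s * s = normsq v3"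
    using normsq_nonneg[of v3] by (simp_all add: s_def)
  define b where "b = conjf (v1 * \<mu>)"
  define m where "m = sqrt (1 + normsq b)"
  have m: "0 < m" "m * m = 1 + normsq b"
    using normsq_nonneg[of b] by (simp_all add: m_def)
  have "m * m = normsq (v2 * \<mu>) + s * s"
    using assms by (simp add: m s b_def normsq_mult \<mu>)
  then obtain g where g: "normsq g \<le> 1" "- conjf g * of_real m = v2 * \<mu>"
    "sqrt (1 - normsq g) * m = s"
    using exists_rotation_column[OF s(1) m(1)] by blast
  have "(rotation g ** boost b)$I1$I3 = v1 * \<mu>"
    by (simp add: rotation_boost_col3 b_def)
  moreover have "(rotation g ** boost b)$I2$I3 = v2 * \<mu>"
    using g(2) by (simp add: rotation_boost_col3 m_def[symmetric])
  moreover have "(rotation g ** boost b)$I3$I3 = v3 * \<mu>"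
    using g(3) by (simp add: rotation_boost_col3 \<mu>(2) s_def[symmetric] m_def[symmetric] flip:
      of_real_mult)
  moreover have "rotation g ** boost b \<in> Hgrp G"
    by (intro H_mult rotation_in_H boost_in_H g(1))
  moreover have "\<mu> \<noteq> 0"
    using \<mu>(1) by auto
  ultimately show ?thesis
    by blast
qed

lemma exists_H_first_column:
  fixes v1 v2 v3 :: 'a
  assumes e: "normsq v1 - normsq v2 - normsq v3 = 1"
  shows "\<exists>h\<in>Hgrp G. \<exists>l. l \<noteq> 0 \<and> h$I1$I1 = v1 * l \<and> h$I2$I1 = v2 * l \<and> h$I3$I1 = v3 * l"
proof (cases "v2 = 0 \<and> v3 = 0")
  case True
  then have "v1 \<noteq> 0" using e by auto
  then show ?thesis
    using True mat1_H
    by (intro bexI[of _ "mat 1"] exI[of _ "inverse v1"]) (auto simp: mat1_mat3_entry)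
next
  case False
  obtain \<mu> where \<mu>: "normsq \<mu> = 1" "v1 * \<mu> = of_real (sqrt (normsq v1))"
    using unit_phase_exists by blast
  obtain \<nu> where \<nu>: "normsq \<nu> = 1" "v3 * \<mu> * \<nu> = of_real (sqrt (normsq (v3 * \<mu>)))"
    using unit_phase_exists by blast
  define s where "s = sqrt (normsq (v3 * \<mu>))"
  have s: "0 \<le> s" "s * s = normsq v3"
    using normsq_nonneg[of v3] by (simp_all add: s_def normsq_mult \<mu>)
  define m where "m = sqrt (normsq v2 + normsq v3)"
  have m: "0 < m" "m * m = normsq v2 + normsq v3"
    using False normsq_pos[of v2] normsq_pos[of v3] normsq_nonneg[of v2] normsq_nonneg[of v3]
    by (auto simp: m_def)
  have "m * m = normsq (v2 * \<mu> * \<nu>) + s * s"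
    by (simp add: m s normsq_mult \<mu> \<nu>)
  then obtain g where g: "normsq g \<le> 1" "- conjf g * of_real m = v2 * \<mu> * \<nu>"
    "sqrt (1 - normsq g) * m = s"
    using exists_rotation_column[OF s(1) m(1)] by blast
  define b where "b = of_real m * conjf \<nu>"
  have "sqrt (1 + normsq b) = sqrt (normsq v1)"
    using e by (simp add: b_def normsq_mult \<nu> m)
  moreover have "\<nu> * conjf \<nu> = 1"
    using \<nu>(1) by (simp add: mult_conj_self)
  ultimately have "(rotation g ** boost b)$I1$I1 = v1 * \<mu>" "(rotation g ** boost b)$I2$I1 = v2 * \<mu>"
    "(rotation g ** boost b)$I3$I1 = v3 * \<mu>"
    using rotation_boost_first_column[OF _ \<nu>(2)[folded s_def] g(2,3)]
    by (simp_all add: b_def \<mu>(2) rotation_boost_col1)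
  moreover have "rotation g ** boost b \<in> Hgrp G"
    by (intro H_mult rotation_in_H boost_in_H g(1))
  moreover have "\<mu> \<noteq> 0"
    using \<mu>(1) by auto
  ultimately show ?thesis
    by blast
qed

lemma rotation_minus_1: "rotation (-1 :: 'a) = mk_mat3 1 0 0 0 0 1 0 (-1) 0"
  by (simp add: rotation_eq_mk_mat3 conj_minus)

lemma exists_H_second_column:
  fixes v1 v2 v3 :: 'a
  assumes e: "normsq v1 - normsq v2 - normsq v3 = -1"
  shows "\<exists>h\<in>Hgrp G. \<exists>l. l \<noteq> 0 \<and> h$I1$I2 = v1 * l \<and> h$I2$I2 = v2 * l \<and> h$I3$I2 = v3 * l"
proof -
  obtain h l where h: "h \<in> Hgrp G" "l \<noteq> 0" "h$I1$I3 = v1 * l" "h$I2$I3 = v2 * l" "h$I3$I3 = v3 * l"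
    using exists_H_third_column[OF e] by blast
  have rH: "rotation (-1 :: 'a) \<in> Hgrp G" by (rule rotation_in_H) simp
  have "h ** rotation (-1) \<in> Hgrp G" by (rule H_mult[OF h(1) rH])
  moreover have "(h ** rotation (-1))$i$I2 = - (h$i$I3)" for i
    by (simp add: rotation_minus_1 matrix_mult_mat3_entry)
  ultimately show ?thesis using h(2-)
    by (intro bexI[of _ "h ** rotation (-1)"] exI[of _ "- l"]) auto
qed

end

section \<open>\<open>\<sigma>\<close>-parabolic subgroups\<close>

definition Jnorm :: "'a::star_div_algebra mat3 \<Rightarrow> ix \<Rightarrow> real" where
  "Jnorm q j = normsq (q$I1$j) - normsq (q$I2$j) - normsq (q$I3$j)"

lemma Jform_entry:
  "(ctrans q ** Jmat ** q)$i$j =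
    conjf (q$I1$i) * q$I1$j - conjf (q$I2$i) * q$I2$j - conjf (q$I3$i) * q$I3$j"
  by (simp add: matrix_mult_mat3_entry ctrans_entry Jmat_entry)

lemma Jform_diag: "(ctrans q ** Jmat ** q)$j$j = of_real (Jnorm q j)"
  by (simp add: Jform_entry Jnorm_def conj_mult_self)

lemma Jform_basis_column:
  assumes "\<And>k. q$k$d = (if k = c then x else 0)"
  shows "(ctrans q ** Jmat ** q)$i$d = conjf (q$c$i) * Jmat$c$c * x"
  using assms by (cases c) (simp_all add: Jform_entry Jmat_entry)

context transvection_group begin

lemma Jnorm_H_first_column: "h \<in> Hgrp G \<Longrightarrow> Jnorm h I1 = 1"
  using arg_cong[OF H_Jform, of h "\<lambda>m. m$I1$I1"] by (simp add: Jform_diag Jmat_entry)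

lemma H_entry11_nonzero: "h \<in> Hgrp G \<Longrightarrow> h$I1$I1 \<noteq> 0"
  using Jnorm_H_first_column[of h] normsq_nonneg[of "h$I2$I1"] normsq_nonneg[of "h$I3$I1"]
  by (auto simp: Jnorm_def)

lemma Jform_mult_sigma:
  assumes g: "g \<in> G"
  shows "(ctrans g ** Jmat ** g) ** (matrix_inv g ** sigma g) = Jmat"
proof -
  have "(ctrans g ** Jmat ** g) ** (matrix_inv g ** sigma g) =
      ctrans g ** Jmat ** (g ** matrix_inv g) ** sigma g"
    by (simp add: matrix_mul_assoc)
  also have "\<dots> = ctrans g ** (Jmat ** Jmat) ** ctrans (matrix_inv g) ** Jmat"
    by (simp add: mult_matrix_inv g sigma_def theta_def matrix_mul_assoc)
  also have "\<dots> = ctrans (matrix_inv g ** g) ** Jmat"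
    by (simp add: ctrans_mult)
  finally show ?thesis
    by (simp add: matrix_inv_mult g)
qed

lemma Jform_eq_Jmat_matrix_inv:
  assumes g: "g \<in> G"
  shows "ctrans g ** Jmat ** g = Jmat ** matrix_inv (matrix_inv g ** sigma g)"
proof -
  have k: "matrix_inv g ** sigma g \<in> G"
    by (simp add: mult_mem inv_mem sigma_mem g)
  have "ctrans g ** Jmat ** g =
      ((ctrans g ** Jmat ** g) ** (matrix_inv g ** sigma g)) ** matrix_inv (matrix_inv g ** sigma g)"
    by (metis matrix_mul_assoc mult_matrix_inv[OF k] matrix_mul_rid)
  then show ?thesis
    by (simp only: Jform_mult_sigma[OF g])
qed

lemma exists_H_column_multiple:
  assumes r: "Jnorm g d \<noteq> 0" and c': "c' \<noteq> I1"
  obtains h l c where "h \<in> Hgrp G" "l \<noteq> 0" "\<And>i. h$i$c = g$i$d * l"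
    "c = (if 0 < Jnorm g d then I1 else c')"
proof -
  define k where "k = 1 / sqrt \<bar>Jnorm g d\<bar>"
  define v where "v i = g$i$d * of_real k" for i
  have k: "k \<noteq> 0" using r by (simp add: k_def)
  have "normsq (v I1) - normsq (v I2) - normsq (v I3) = k * k * Jnorm g d"
    by (simp add: v_def Jnorm_def normsq_mult algebra_simps)
  also have "\<dots> = sgn (Jnorm g d)"
    using r by (simp add: k_def sgn_if)
  finally have v: "normsq (v I1) - normsq (v I2) - normsq (v I3) = sgn (Jnorm g d)" .
  have col: "h$i$c = g$i$d * (of_real k * l)"
    if "h$I1$c = v I1 * l" "h$I2$c = v I2 * l" "h$I3$c = v I3 * l" for h c l i
    using that by (cases i) (simp_all add: v_def mult.assoc)
  show ?thesis
  proof (cases "0 < Jnorm g d")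
    case True
    then obtain h l where "h \<in> Hgrp G" "l \<noteq> 0" "h$I1$I1 = v I1 * l" "h$I2$I1 = v I2 * l"
      "h$I3$I1 = v I3 * l"
      using exists_H_first_column[of "v I1" "v I2" "v I3"] v by auto
    with True k show ?thesis
      by (intro that[of h "of_real k * l" I1]) (simp_all add: col)
  next
    case False
    then have v': "normsq (v I1) - normsq (v I2) - normsq (v I3) = -1"
      using v r by (simp add: sgn_if)
    obtain h l where "h \<in> Hgrp G" "l \<noteq> 0" "h$I1$c' = v I1 * l" "h$I2$c' = v I2 * l"
      "h$I3$c' = v I3 * l"
      using exists_H_third_column[OF v'] exists_H_second_column[OF v'] c' by (cases c') auto
    with False k show ?thesis
      by (intro that[of h "of_real k * l" c']) (simp_all add: col)
  qed
qed

lemma H_column_transfer: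
  assumes h: "h \<in> Hgrp G" and g: "g \<in> G" and l: "l \<noteq> 0" and hc: "\<And>i. h$i$c = g$i$d * l"
  defines "q \<equiv> matrix_inv h ** g"
  shows "q \<in> G" "g = h ** q" "\<And>k. q$k$d = (if k = c then inverse l else 0)"
    "ctrans q ** Jmat ** q = ctrans g ** Jmat ** g"
proof -
  have hG: "h \<in> G" by (rule H_mem[OF h])
  show "q \<in> G" "g = h ** q"
    by (simp_all add: q_def mult_mem inv_mem hG g matrix_mul_assoc mult_matrix_inv)
  have gc: "g$k$d = h$k$c * inverse l" for k
    using hc[of k] l by (simp add: mult_inverse_cancel_right)
  have "q$k$d = (matrix_inv h ** h)$k$c * inverse l" for k
    by (simp add: q_def matrix_mult_mat3_entry gc distrib_right mult.assoc)
  then show "q$k$d = (if k = c then inverse l else 0)" for k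
    by (simp add: matrix_inv_mult hG mat1_mat3_entry)
  have "ctrans q ** Jmat ** q = ctrans g ** (ctrans (matrix_inv h) ** Jmat ** matrix_inv h) ** g"
    by (simp add: q_def ctrans_mult matrix_mul_assoc)
  then show "ctrans q ** Jmat ** q = ctrans g ** Jmat ** g"
    by (simp only: H_Jform[OF H_matrix_inv[OF h]])
qed

lemma conjset_mult_subgroup:
  "h \<in> G \<Longrightarrow> is_subgroup G S \<Longrightarrow> q \<in> S \<Longrightarrow> conjset (h ** q) S = conjset h S"
  by (simp add: conjset_mult conjset_subgroup_self is_subgroup_def subset_iff)

lemma sigma_opposite_hyperplane_Jform:
  assumes g: "g \<in> G"
    and opp: "sigma ` conjset g (hyperplane_stab G I3) = conjset g (line_stab G I3)"
  shows "(ctrans g ** Jmat ** g)$I1$I3 = 0" "(ctrans g ** Jmat ** g)$I2$I3 = 0"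
    "(ctrans g ** Jmat ** g)$I3$I3 \<noteq> 0"
proof -
  define k where "k = matrix_inv g ** sigma g"
  have kG: "k \<in> G" by (simp add: k_def mult_mem inv_mem sigma_mem g)
  have "conjset k (line_stab G I3) = conjset (matrix_inv g) (conjset (sigma g) (line_stab G I3))"
    by (simp add: k_def conjset_mult inv_mem sigma_mem g)
  also have "\<dots> = line_stab G I3"
    using opp g by (simp add: sigma_conjset hyperplane_stab_subset sigma_hyperplane_stab
        conjset_matrix_inv_cancel)
  finally have "matrix_inv k \<in> line_stab G I3"
    by (intro matrix_inv_line_stab self_normalizing_line_stab kG)
  then have ki: "matrix_inv k$I1$I3 = 0" "matrix_inv k$I2$I3 = 0" "matrix_inv k$I3$I3 \<noteq> 0"
    using zero_col_not_mem[of "matrix_inv k" I3] by (auto simp: line_stab_def all_ix)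
  have "ctrans g ** Jmat ** g = Jmat ** matrix_inv k"
    unfolding k_def by (rule Jform_eq_Jmat_matrix_inv[OF g])
  then show "(ctrans g ** Jmat ** g)$I1$I3 = 0" "(ctrans g ** Jmat ** g)$I2$I3 = 0"
    "(ctrans g ** Jmat ** g)$I3$I3 \<noteq> 0"
    using ki by (simp_all add: matrix_mult_mat3_entry Jmat_entry)
qed

lemma sigma_opposite_line_Jform:
  assumes g: "g \<in> G"
    and opp: "sigma ` conjset g (line_stab G I1) = conjset g (hyperplane_stab G I1)"
  shows "(ctrans g ** Jmat ** g)$I1$I1 \<noteq> 0"
proof -
  define k where "k = matrix_inv g ** sigma g"
  have kG: "k \<in> G" by (simp add: k_def mult_mem inv_mem sigma_mem g)
  have "conjset k (hyperplane_stab G I1) =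
      conjset (matrix_inv g) (conjset (sigma g) (hyperplane_stab G I1))"
    by (simp add: k_def conjset_mult inv_mem sigma_mem g)
  also have "\<dots> = hyperplane_stab G I1"
    using opp g
    by (simp add: sigma_conjset line_stab_subset sigma_line_stab conjset_matrix_inv_cancel)
  finally have "matrix_inv k \<in> hyperplane_stab G I1"
    by (intro matrix_inv_hyperplane_stab self_normalizing_hyperplane_stab kG)
  then have ki: "matrix_inv k$I1$I1 \<noteq> 0"
    using zero_row_not_mem[of "matrix_inv k" I1] by (auto simp: hyperplane_stab_def all_ix)
  have "ctrans g ** Jmat ** g = Jmat ** matrix_inv k"
    unfolding k_def by (rule Jform_eq_Jmat_matrix_inv[OF g])
  then show ?thesis
    using ki by (simp add: matrix_mult_mat3_entry Jmat_entry)
qed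

text \<open>Once \<open>H\<close> has moved the non-isotropic third column of \<open>g\<close> to a multiple of
  \<open>e\<^sub>3\<close> or \<open>e\<^sub>1\<close>, the vanishing entries \<open>(g\<^sup>* J g)\<^sub>1\<^sub>3\<close> and
  \<open>(g\<^sup>* J g)\<^sub>2\<^sub>3\<close> force the remaining zeros.\<close>

lemma sigma_parabolic_hyperplane_cases:
  assumes g: "g \<in> G"
    and opp: "sigma ` conjset g (hyperplane_stab G I3) = conjset g (line_stab G I3)"
  shows "\<exists>h\<in>Hgrp G. conjset g (hyperplane_stab G I3) = conjset h (hyperplane_stab G I3) \<or>
    conjset g (hyperplane_stab G I3) = conjset h (hyperplane_stab G I1)"
proof -
  note M = sigma_opposite_hyperplane_Jform[OF g opp]
  have "Jnorm g I3 \<noteq> 0"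
    using M(3) by (simp add: Jform_diag)
  then obtain h l c where h: "h \<in> Hgrp G" "l \<noteq> 0" "\<And>i. h$i$c = g$i$I3 * l"
    and c: "c = (if 0 < Jnorm g I3 then I1 else I3)"
    using exists_H_column_multiple[of g I3 I3] by auto
  define q where "q = matrix_inv h ** g"
  note q = H_column_transfer[OF h(1) g h(2) h(3), folded q_def]
  have qc: "q$c$i = 0" if "i = I1 \<or> i = I2" for i
  proof -
    have "conjf (q$c$i) * Jmat$c$c * inverse l = 0"
      using that M(1,2) by (auto simp flip: q(4) simp: Jform_basis_column[OF q(3)])
    then show ?thesis
      using h(2) by (simp add: Jmat_entry split: if_splits)
  qed
  have hG: "h \<in> G" by (rule H_mem[OF h(1)])
  show ?thesis
  proof (cases "c = I3")
    case True
    then have "q \<in> hyperplane_stab G I3"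
      using qc[of I1] qc[of I2] q(1) by (simp add: hyperplane_stab_def all_ix)
    then show ?thesis
      using h(1) q(2) hG by (metis conjset_mult_subgroup is_subgroup_hyperplane_stab)
  next
    case False
    then have "c = I1" using c by (simp split: if_splits)
    then have "matrix_inv weyl_cycle ** q \<in> hyperplane_stab G I3"
      using qc[of I1] qc[of I2] mult_mem[OF inv_mem[OF weyl_cycle_mem] q(1)]
      by (simp add: hyperplane_stab_def all_ix matrix_inv_weyl_cycle matrix_mult_mat3_entry)
    moreover have "g = h ** weyl_cycle ** (matrix_inv weyl_cycle ** q)"
      using q(2) by (simp add: matrix_mul_assoc mult_matrix_inv_cancel_right weyl_cycle_mem)
    ultimately show ?thesis
      using h(1) hG weyl_cycle_mem
      by (metis conjset_mult_subgroup is_subgroup_hyperplane_stab conjset_mult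
          conjset_weyl_cycle_hyperplane_stab mult_mem)
  qed
qed

lemma sigma_parabolic_line_cases:
  assumes g: "g \<in> G"
    and opp: "sigma ` conjset g (line_stab G I1) = conjset g (hyperplane_stab G I1)"
  shows "\<exists>h\<in>Hgrp G. conjset g (line_stab G I1) = conjset h (line_stab G I1) \<or>
    conjset g (line_stab G I1) = conjset h (line_stab G I2)"
proof -
  have "Jnorm g I1 \<noteq> 0"
    using sigma_opposite_line_Jform[OF g opp] by (simp add: Jform_diag)
  then obtain h l c where h: "h \<in> Hgrp G" "l \<noteq> 0" "\<And>i. h$i$c = g$i$I1 * l"
    and c: "c = (if 0 < Jnorm g I1 then I1 else I2)"
    using exists_H_column_multiple[of g I1 I2] by auto
  define q where "q = matrix_inv h ** g"
  note q = H_column_transfer[OF h(1) g h(2) h(3), folded q_def]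
  have hG: "h \<in> G" by (rule H_mem[OF h(1)])
  show ?thesis
  proof (cases "c = I1")
    case True
    then have "q \<in> line_stab G I1"
      using q(1,3) by (simp add: line_stab_def all_ix)
    then show ?thesis
      using h(1) q(2) hG by (metis conjset_mult_subgroup is_subgroup_line_stab)
  next
    case False
    then have "c = I2" using c by (simp split: if_splits)
    then have "matrix_inv weyl_s12 ** q \<in> line_stab G I1"
      using q(3)[of I1] q(3)[of I3] mult_mem[OF inv_mem[OF weyl_s12_mem] q(1)]
      by (simp add: line_stab_def all_ix matrix_inv_weyl_s12 matrix_mult_mat3_entry)
    moreover have "g = h ** weyl_s12 ** (matrix_inv weyl_s12 ** q)"
      using q(2) by (simp add: matrix_mul_assoc mult_matrix_inv_cancel_right weyl_s12_mem)
    ultimately show ?thesis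
      using h(1) hG weyl_s12_mem
      by (metis conjset_mult_subgroup is_subgroup_line_stab conjset_mult
          conjset_weyl_s12_line_stab mult_mem)
  qed
qed

lemma parabolic_conjset: "parabolic G Q \<Longrightarrow> g \<in> G \<Longrightarrow> parabolic G (conjset g Q)"
proof -
  assume P: "parabolic G Q" and g: "g \<in> G"
  then obtain g' where g': "g' \<in> G" "conjset g' (min_parabolic G) \<subseteq> Q" by (auto simp: parabolic_def)
  have "conjset (g ** g') (min_parabolic G) \<subseteq> conjset g Q"
    using g g' by (simp add: conjset_mult conjset_mono)
  moreover have "g ** g' \<in> G" using g g' mult_mem by blast
  ultimately show ?thesis using P g is_subgroup_conjset by (auto simp: parabolic_def)
qed

lemma maximal_parabolic_conjset:
  assumes M: "maximal_parabolic G Q" and g: "g \<in> G"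
  shows "maximal_parabolic G (conjset g Q)"
  unfolding maximal_parabolic_def
proof (intro conjI allI impI)
  have P: "parabolic G Q" "Q \<noteq> G" using M by (auto simp: maximal_parabolic_def)
  show "parabolic G (conjset g Q)" by (rule parabolic_conjset[OF P(1) g])
  show "conjset g Q \<noteq> G"
  proof
    assume "conjset g Q = G"
    then have "Q = conjset (matrix_inv g) G" by (metis conjset_matrix_inv_cancel g)
    then show False using P(2) conjset_carrier[OF inv_mem[OF g]] by simp
  qed
  fix Q' assume h: "parabolic G Q' \<and> conjset g Q \<subseteq> Q' \<and> Q' \<noteq> G"
  have "parabolic G (conjset (matrix_inv g) Q')" using h parabolic_conjset inv_mem g by blast
  moreover have "Q \<subseteq> conjset (matrix_inv g) Q'"
    using conjset_mono[of "conjset g Q" Q' "matrix_inv g"] h conjset_matrix_inv_cancel[OF g] by simp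
  moreover have "conjset (matrix_inv g) Q' \<noteq> G"
  proof
    assume "conjset (matrix_inv g) Q' = G"
    then have "Q' = conjset g G" by (metis conjset_cancel_matrix_inv g)
    then show False using h conjset_carrier[OF g] by simp
  qed
  ultimately have "conjset (matrix_inv g) Q' = Q" using M by (auto simp: maximal_parabolic_def)
  then show "Q' = conjset g Q" by (metis conjset_cancel_matrix_inv g)
qed

lemma min_parabolic_subset_hyperplane_stab: "min_parabolic G \<subseteq> hyperplane_stab G I3"
  by (auto simp: min_parabolic_iff hyperplane_stab_def all_ix)
lemma min_parabolic_subset_line_stab: "min_parabolic G \<subseteq> line_stab G I1"
  by (auto simp: min_parabolic_iff line_stab_def all_ix)

lemma parabolic_hyperplane_stab: "parabolic G (hyperplane_stab G I3)"
  unfolding parabolic_def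
    using is_subgroup_hyperplane_stab min_parabolic_subset_hyperplane_stab one_mem by force
lemma parabolic_line_stab: "parabolic G (line_stab G I1)"
  unfolding parabolic_def using is_subgroup_line_stab min_parabolic_subset_line_stab one_mem
  by force

lemma maximal_parabolic_hyperplane_stab: "maximal_parabolic G (hyperplane_stab G I3)"
  unfolding maximal_parabolic_def
proof (intro conjI allI impI)
  show "parabolic G (hyperplane_stab G I3)" by (rule parabolic_hyperplane_stab)
  have "transvection I3 I2 1 \<notin> hyperplane_stab G I3"
    by (simp add: hyperplane_stab_def transvection_entry)
  then show "hyperplane_stab G I3 \<noteq> G"
    using transvection_mem[of I3 I2 1] by auto
  fix Q' assume h: "parabolic G Q' \<and> hyperplane_stab G I3 \<subseteq> Q' \<and> Q' \<noteq> G"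
  then have "is_subgroup G Q'" "min_parabolic G \<subseteq> Q'" using min_parabolic_subset_hyperplane_stab
    by (auto simp: parabolic_def)
  then have "Q' \<subseteq> hyperplane_stab G I3 \<or> Q' \<subseteq> line_stab G I1 \<or> Q' = G"
    by (rule min_parabolic_overgroup_cases)
  moreover have "transvection I2 I1 1 \<in> hyperplane_stab G I3 - line_stab G I1"
    by (simp add: transvection_hyperplane_stab line_stab_def transvection_entry)
  ultimately show "Q' = hyperplane_stab G I3" using h by blast
qed

lemma maximal_parabolic_line_stab: "maximal_parabolic G (line_stab G I1)"
  unfolding maximal_parabolic_def
proof (intro conjI allI impI)
  show "parabolic G (line_stab G I1)" by (rule parabolic_line_stab)
  have "transvection I2 I1 1 \<notin> line_stab G I1"
    by (simp add: line_stab_def transvection_entry)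
  then show "line_stab G I1 \<noteq> G"
    using transvection_mem[of I2 I1 1] by auto
  fix Q' assume h: "parabolic G Q' \<and> line_stab G I1 \<subseteq> Q' \<and> Q' \<noteq> G"
  then have "is_subgroup G Q'" "min_parabolic G \<subseteq> Q'" using min_parabolic_subset_line_stab
    by (auto simp: parabolic_def)
  then have "Q' \<subseteq> hyperplane_stab G I3 \<or> Q' \<subseteq> line_stab G I1 \<or> Q' = G"
    by (rule min_parabolic_overgroup_cases)
  moreover have "transvection I3 I2 1 \<in> line_stab G I1 - hyperplane_stab G I3"
    by (simp add: transvection_line_stab hyperplane_stab_def transvection_entry)
  ultimately show "Q' = line_stab G I1" using h by blast
qed

lemma hyperplane_stab3_sigma_parabolic: "hyperplane_stab G I3 \<in> sigma_parabolics G"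
  unfolding sigma_parabolics_def opposite_def
  using maximal_parabolic_hyperplane_stab parabolic_hyperplane_stab
    min_parabolic_subset_hyperplane_stab one_mem sigma_hyperplane_stab theta_hyperplane_stab
  by (auto intro!: bexI[of _ "mat 1"] exI[of _ "hyperplane_stab G I3"])

lemma line_stab1_sigma_parabolic: "line_stab G I1 \<in> sigma_parabolics G"
  unfolding sigma_parabolics_def opposite_def
  using maximal_parabolic_line_stab parabolic_line_stab min_parabolic_subset_line_stab one_mem
    sigma_line_stab theta_line_stab
  by (auto intro!: bexI[of _ "mat 1"] exI[of _ "line_stab G I1"])

lemma hyperplane_stab1_sigma_parabolic: "hyperplane_stab G I1 \<in> sigma_parabolics G"
proof -
  have m: "maximal_parabolic G (hyperplane_stab G I1)"
    using maximal_parabolic_conjset[OF maximal_parabolic_hyperplane_stab weyl_cycle_mem]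
      conjset_weyl_cycle_hyperplane_stab by simp
  have "opposite G (hyperplane_stab G I1) (sigma ` hyperplane_stab G I1)"
    unfolding opposite_def
    by (intro bexI[of _ weyl_cycle] exI[of _ "hyperplane_stab G I3"] conjI parabolic_hyperplane_stab
      min_parabolic_subset_hyperplane_stab weyl_cycle_mem)
       (simp_all add: conjset_weyl_cycle_hyperplane_stab sigma_hyperplane_stab theta_hyperplane_stab
         conjset_weyl_cycle_line_stab)
  then show ?thesis using m by (simp add: sigma_parabolics_def)
qed

lemma line_stab2_sigma_parabolic: "line_stab G I2 \<in> sigma_parabolics G"
proof -
  have m: "maximal_parabolic G (line_stab G I2)"
    using maximal_parabolic_conjset[OF maximal_parabolic_line_stab weyl_s12_mem]
      conjset_weyl_s12_line_stab by simp
  have "opposite G (line_stab G I2) (sigma ` line_stab G I2)"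
    unfolding opposite_def
    by (intro bexI[of _ weyl_s12] exI[of _ "line_stab G I1"] conjI parabolic_line_stab
      min_parabolic_subset_line_stab weyl_s12_mem)
       (simp_all add: conjset_weyl_s12_line_stab sigma_line_stab theta_line_stab
         conjset_weyl_s12_hyperplane_stab)
  then show ?thesis using m by (simp add: sigma_parabolics_def)
qed

lemma maximal_parabolic_opposite_cases:
  assumes M: "maximal_parabolic G Q" and O: "opposite G Q Q'"
  obtains g where "g \<in> G" "Q = conjset g (hyperplane_stab G I3)" "Q' = conjset g (line_stab G I3)"
  | g where "g \<in> G" "Q = conjset g (line_stab G I1)" "Q' = conjset g (hyperplane_stab G I1)"
proof -
  obtain g P where g: "g \<in> G" and P: "is_subgroup G P" "min_parabolic G \<subseteq> P"
    and QP: "Q = conjset g P" and Q'P: "Q' = conjset g (theta ` P)"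
    using O by (auto simp: opposite_def parabolic_def)
  have max: "Q' = Q" if "parabolic G Q'" "Q \<subseteq> Q'" "Q' \<noteq> G" for Q'
    using M that by (auto simp: maximal_parabolic_def)
  have "Q \<noteq> G"
    using M by (simp add: maximal_parabolic_def)
  then have "P \<noteq> G"
    using QP conjset_carrier[OF g] by auto
  then consider "P \<subseteq> hyperplane_stab G I3" | "P \<subseteq> line_stab G I1"
    using min_parabolic_overgroup_cases[OF P] by blast
  then show ?thesis
  proof cases
    case 1
    have "conjset g (hyperplane_stab G I3) = Q"
      using max maximal_parabolic_conjset[OF maximal_parabolic_hyperplane_stab g] QP conjset_mono[OF
        1]
      by (auto simp: maximal_parabolic_def)
    then have "P = hyperplane_stab G I3"
      using QP conjset_inj[OF g] by auto
    then show ?thesis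
      using that(1)[OF g] QP Q'P theta_hyperplane_stab by simp
  next
    case 2
    have "conjset g (line_stab G I1) = Q"
      using max maximal_parabolic_conjset[OF maximal_parabolic_line_stab g] QP conjset_mono[OF 2]
      by (auto simp: maximal_parabolic_def)
    then have "P = line_stab G I1"
      using QP conjset_inj[OF g] by auto
    then show ?thesis
      using that(2)[OF g] QP Q'P theta_line_stab by simp
  qed
qed

lemma sigma_parabolic_H_conjugate:
  assumes "Q \<in> sigma_parabolics G"
  shows "\<exists>h\<in>Hgrp G. Q = conjset h (hyperplane_stab G I3) \<or> Q = conjset h (hyperplane_stab G I1) \<or>
    Q = conjset h (line_stab G I1) \<or> Q = conjset h (line_stab G I2)"
proof -
  have "maximal_parabolic G Q" "opposite G Q (sigma ` Q)"
    using assms by (simp_all add: sigma_parabolics_def)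
  then show ?thesis
  proof (rule maximal_parabolic_opposite_cases)
    fix g
    assume "g \<in> G" "Q = conjset g (hyperplane_stab G I3)" "sigma ` Q = conjset g (line_stab G I3)"
    then show ?thesis
      using sigma_parabolic_hyperplane_cases[of g] by blast
  next
    fix g
    assume "g \<in> G" "Q = conjset g (line_stab G I1)" "sigma ` Q = conjset g (hyperplane_stab G I1)"
    then show ?thesis
      using sigma_parabolic_line_cases[of g] by blast
  qed
qed

lemma H_orbit_conjset: assumes h: "h \<in> Hgrp G" shows "H_orbit G (conjset h A) = H_orbit G A"
proof
  have hG: "h \<in> G" by (rule H_mem[OF h])
  show "H_orbit G (conjset h A) \<subseteq> H_orbit G A"
  proof
    fix X assume "X \<in> H_orbit G (conjset h A)"
    then obtain h' where h': "h' \<in> Hgrp G" "X = conjset h' (conjset h A)"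
      by (auto simp: H_orbit_def)
    then have "X = conjset (h' ** h) A" by (simp add: conjset_mult H_mem hG)
    then show "X \<in> H_orbit G A" using H_mult[OF h'(1) h] by (auto simp: H_orbit_def)
  qed
  show "H_orbit G A \<subseteq> H_orbit G (conjset h A)"
  proof
    fix X assume "X \<in> H_orbit G A"
    then obtain h' where h': "h' \<in> Hgrp G" "X = conjset h' A" by (auto simp: H_orbit_def)
    have "X = conjset (h' ** matrix_inv h) (conjset h A)"
      using h' by (simp add: conjset_mult H_mem hG inv_mem conjset_matrix_inv_cancel)
    then show "X \<in> H_orbit G (conjset h A)" using H_mult[OF h'(1) H_matrix_inv[OF h]]
      by (auto simp: H_orbit_def)
  qed
qed

lemma mem_H_orbit_self: "A \<in> H_orbit G A"
  using mat1_H by (auto simp: H_orbit_def intro!: exI[of _ "mat 1"])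

lemma H_orbit_neqI: assumes "\<And>h. h \<in> Hgrp G \<Longrightarrow> B \<noteq> conjset h A" shows "H_orbit G A \<noteq> H_orbit G B"
proof
  assume "H_orbit G A = H_orbit G B"
  then have "B \<in> H_orbit G A" using mem_H_orbit_self by simp
  then show False using assms by (auto simp: H_orbit_def)
qed

lemma Q2_not_H_conj_Q1: "h \<in> Hgrp G \<Longrightarrow> hyperplane_stab G I1 \<noteq> conjset h (hyperplane_stab G I3)"
proof
  assume h: "h \<in> Hgrp G" and e: "hyperplane_stab G I1 = conjset h (hyperplane_stab G I3)"
  have hG: "h \<in> G" by (rule H_mem[OF h])
  have "conjset (matrix_inv weyl_cycle ** h) (hyperplane_stab G I3) =
      conjset (matrix_inv weyl_cycle) (conjset weyl_cycle (hyperplane_stab G I3))"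
    by (simp add: conjset_mult inv_mem weyl_cycle_mem hG flip: e conjset_weyl_cycle_hyperplane_stab)
  also have "\<dots> = hyperplane_stab G I3" by (rule conjset_matrix_inv_cancel[OF weyl_cycle_mem])
  finally have "matrix_inv weyl_cycle ** h \<in> hyperplane_stab G I3"
    by (rule self_normalizing_hyperplane_stab[OF mult_mem[OF inv_mem[OF weyl_cycle_mem] hG]])
  then have "(matrix_inv weyl_cycle ** h)$I3$I1 = 0" by (simp add: hyperplane_stab_def)
  then have "h$I1$I1 = 0" by (simp add: matrix_inv_weyl_cycle matrix_mult_mat3_entry)
  then show False using H_entry11_nonzero[OF h] by simp
qed

lemma Q4_not_H_conj_Q3: "h \<in> Hgrp G \<Longrightarrow> line_stab G I2 \<noteq> conjset h (line_stab G I1)"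
proof
  assume h: "h \<in> Hgrp G" and e: "line_stab G I2 = conjset h (line_stab G I1)"
  have hG: "h \<in> G" by (rule H_mem[OF h])
  have "conjset (matrix_inv weyl_s12 ** h) (line_stab G I1) =
      conjset (matrix_inv weyl_s12) (conjset weyl_s12 (line_stab G I1))"
    by (simp add: conjset_mult inv_mem weyl_s12_mem hG flip: e conjset_weyl_s12_line_stab)
  also have "\<dots> = line_stab G I1" by (rule conjset_matrix_inv_cancel[OF weyl_s12_mem])
  finally have "matrix_inv weyl_s12 ** h \<in> line_stab G I1"
    by (rule self_normalizing_line_stab[OF mult_mem[OF inv_mem[OF weyl_s12_mem] hG]])
  then have "(matrix_inv weyl_s12 ** h)$I2$I1 = 0" by (simp add: line_stab_def)
  then have "h$I1$I1 = 0" by (simp add: matrix_inv_weyl_s12 matrix_mult_mat3_entry)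
  then show False using H_entry11_nonzero[OF h] by simp
qed

lemma Q3_not_H_conj_Q1: "h \<in> Hgrp G \<Longrightarrow> line_stab G I1 \<noteq> conjset h (hyperplane_stab G I3)"
  using conjset_hyperplane_stab_ne_line_stab[OF H_mem] by metis

lemma Q4_not_H_conj_Q1: "h \<in> Hgrp G \<Longrightarrow> line_stab G I2 \<noteq> conjset h (hyperplane_stab G I3)"
proof
  assume h: "h \<in> Hgrp G" and e: "line_stab G I2 = conjset h (hyperplane_stab G I3)"
  have hG: "h \<in> G" by (rule H_mem[OF h])
  have "conjset (matrix_inv weyl_s12 ** h) (hyperplane_stab G I3) =
      conjset (matrix_inv weyl_s12) (conjset weyl_s12 (line_stab G I1))"
    by (simp add: conjset_mult inv_mem weyl_s12_mem hG flip: e conjset_weyl_s12_line_stab)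
  also have "\<dots> = line_stab G I1" by (rule conjset_matrix_inv_cancel[OF weyl_s12_mem])
  finally show False
    using conjset_hyperplane_stab_ne_line_stab[OF mult_mem[OF inv_mem[OF weyl_s12_mem] hG]] by simp
qed

lemma Q3_not_H_conj_Q2: "h \<in> Hgrp G \<Longrightarrow> line_stab G I1 \<noteq> conjset h (hyperplane_stab G I1)"
proof
  assume h: "h \<in> Hgrp G" and e: "line_stab G I1 = conjset h (hyperplane_stab G I1)"
  have hG: "h \<in> G" by (rule H_mem[OF h])
  have "conjset (h ** weyl_cycle) (hyperplane_stab G I3) = line_stab G I1"
    by (simp add: conjset_mult weyl_cycle_mem hG e conjset_weyl_cycle_hyperplane_stab)
  then show False using conjset_hyperplane_stab_ne_line_stab[OF mult_mem[OF hG weyl_cycle_mem]]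
    by simp
qed

lemma Q4_not_H_conj_Q2: "h \<in> Hgrp G \<Longrightarrow> line_stab G I2 \<noteq> conjset h (hyperplane_stab G I1)"
proof
  assume h: "h \<in> Hgrp G" and e: "line_stab G I2 = conjset h (hyperplane_stab G I1)"
  have hG: "h \<in> G" by (rule H_mem[OF h])
  have "conjset (matrix_inv weyl_s12 ** (h ** weyl_cycle)) (hyperplane_stab G I3) =
      conjset (matrix_inv weyl_s12) (conjset weyl_s12 (line_stab G I1))"
    by (simp add: conjset_mult inv_mem weyl_s12_mem weyl_cycle_mem mult_mem hG
      conjset_weyl_cycle_hyperplane_stab flip: e conjset_weyl_s12_line_stab)
  also have "\<dots> = line_stab G I1" by (rule conjset_matrix_inv_cancel[OF weyl_s12_mem])
  finally show False
    using conjset_hyperplane_stab_ne_line_stab[OF mult_mem[OF inv_mem[OF weyl_s12_mem] mult_mem[OF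
      hG weyl_cycle_mem]]] by simp
qed

lemma H_orbits_sigma_parabolics:
  "H_orbit G ` sigma_parabolics G =
    {H_orbit G (hyperplane_stab G I3), H_orbit G (hyperplane_stab G I1),
     H_orbit G (line_stab G I1), H_orbit G (line_stab G I2)}" (is "_ = ?orbits")
proof
  show "H_orbit G ` sigma_parabolics G \<subseteq> ?orbits"
  proof
    fix X
    assume "X \<in> H_orbit G ` sigma_parabolics G"
    then obtain Q where Q: "Q \<in> sigma_parabolics G" "X = H_orbit G Q"
      by blast
    obtain h where "h \<in> Hgrp G" and "Q = conjset h (hyperplane_stab G I3) \<or>
        Q = conjset h (hyperplane_stab G I1) \<or> Q = conjset h (line_stab G I1) \<or>
        Q = conjset h (line_stab G I2)"
      using sigma_parabolic_H_conjugate[OF Q(1)] by blast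
    then show "X \<in> ?orbits"
      using Q(2) H_orbit_conjset by auto
  qed
  show "?orbits \<subseteq> H_orbit G ` sigma_parabolics G"
    using hyperplane_stab3_sigma_parabolic hyperplane_stab1_sigma_parabolic
      line_stab1_sigma_parabolic line_stab2_sigma_parabolic by blast
qed

theorem four_orbits: "four_orbits G"
proof -
  have "H_orbit G (hyperplane_stab G I3) \<noteq> H_orbit G (hyperplane_stab G I1)"
    "H_orbit G (hyperplane_stab G I3) \<noteq> H_orbit G (line_stab G I1)"
    "H_orbit G (hyperplane_stab G I3) \<noteq> H_orbit G (line_stab G I2)"
    "H_orbit G (hyperplane_stab G I1) \<noteq> H_orbit G (line_stab G I1)"
    "H_orbit G (hyperplane_stab G I1) \<noteq> H_orbit G (line_stab G I2)"
    "H_orbit G (line_stab G I1) \<noteq> H_orbit G (line_stab G I2)"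
    by (intro H_orbit_neqI Q2_not_H_conj_Q1 Q3_not_H_conj_Q1 Q4_not_H_conj_Q1 Q3_not_H_conj_Q2
        Q4_not_H_conj_Q2 Q4_not_H_conj_Q3; assumption)+
  then show ?thesis
    unfolding four_orbits_def Q_eq_stab H_orbits_sigma_parabolics by simp
qed

end

section \<open>The groups \<open>SL(3,F)\<close>\<close>

lemma det_transvection: "i \<noteq> j \<Longrightarrow> det (transvection i j t :: 'a::field mat3) = 1"
proof -
  assume ij: "i \<noteq> j"
  have "transvection i j t =
      ((\<chi> k. if k = i then row i (mat 1) + t *s row j (mat 1) else row k (mat 1)) :: 'a mat3)"
    using ij by (auto simp: vec_eq_iff transvection_entry row_def mat_def)
  then show ?thesis using det_row_operation[OF ij, of "mat 1 :: 'a mat3" t] by simp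
qed

lemma transvection_group_det_one:
  fixes G :: "('a::{field,star_div_algebra}) mat3 set"
  assumes GD: "G = {g. det g = 1}"
    and ct: "\<And>g. det (ctrans g :: 'a mat3) = conjf (det g)"
  shows "transvection_group G"
proof
  fix g h :: "'a mat3" and i j :: ix and t :: 'a
  show "g \<in> G \<Longrightarrow> invertible g" by (simp add: GD invertible_det_nz)
  show "g \<in> G \<Longrightarrow> h \<in> G \<Longrightarrow> g ** h \<in> G" by (simp add: GD det_mul)
  show "mat 1 \<in> G" by (simp add: GD)
  show "g \<in> G \<Longrightarrow> matrix_inv g \<in> G"
  proof -
    assume g: "g \<in> G"
    then have "g ** matrix_inv g = mat 1" using matrix_inv_invertible[of g]
      by (simp add: GD invertible_det_nz)
    then have "det g * det (matrix_inv g) = 1" by (metis det_mul det_I)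
    then show ?thesis using g by (simp add: GD)
  qed
  show "i \<noteq> j \<Longrightarrow> transvection i j t \<in> G" by (simp add: GD det_transvection)
  show "g \<in> G \<Longrightarrow> ctrans g \<in> G" by (simp add: GD ct)
qed

lemma det_ctrans_real: "det (ctrans (g :: real mat3)) = conjf (det g)"
proof -
  have "ctrans g = transpose g" by (simp add: vec_eq_iff ctrans_def transpose_def conjf_real_def)
  then show ?thesis by (simp add: conjf_real_def)
qed

lemma det_cnj_matrix: "det (\<chi> i j. cnj ((A :: complex^'n^'n) $ i $ j)) = cnj (det A)"
  by (simp add: det_def cnj_sum cnj_prod)

lemma det_ctrans_complex: "det (ctrans (g :: complex mat3)) = conjf (det g)"
proof -
  have "ctrans g = transpose (\<chi> i j. cnj (g $ i $ j))"
    by (simp add: vec_eq_iff ctrans_def transpose_def conjf_complex_def)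
  then show ?thesis by (simp add: conjf_complex_def det_cnj_matrix)
qed

lemma transvection_group_SL3R: "transvection_group SL3R"
  by (rule transvection_group_det_one[OF SL3R_def det_ctrans_real]) 

lemma transvection_group_SL3C: "transvection_group SL3C"
  by (rule transvection_group_det_one[OF SL3C_def det_ctrans_complex]) 

lemma qz_add: "qz (a + b) = qz a + qz b" and qw_add: "qw (a + b) = qw a + qw b"
  by (simp_all add: qz_def qw_def plus_quat_def complex_eq_iff)

lemma qz_mult: "qz (a * b) = qz a * qz b - qw a * cnj (qw b)"
  and qw_mult: "qw (a * b) = qz a * qw b + qw a * cnj (qz b)"
  by (simp_all add: qz_def qw_def times_quat_def complex_eq_iff algebra_simps)

lemma qz_0[simp]: "qz 0 = 0" and qw_0[simp]: "qw 0 = 0" and qz_1[simp]: "qz 1 = 1"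
  and qw_1[simp]: "qw 1 = 0"
  by (simp_all add: qz_def qw_def zero_quat_def one_quat_def complex_eq_iff)

lemma qz_conj: "qz (conjf q) = cnj (qz q)" and qw_conj: "qw (conjf q) = - qw q"
  by (simp_all add: qz_def qw_def conjf_quat_def complex_eq_iff)

lemma UNIV_ix_plus_ix: "(UNIV :: (ix + ix) set) = {Inl I1, Inl I2, Inl I3, Inr I1, Inr I2, Inr I3}"
proof -
  have "x \<in> {Inl I1, Inl I2, Inl I3, Inr I1, Inr I2, Inr I3}" for x :: "ix + ix"
  proof (cases x)
    case (Inl a) then show ?thesis by (cases a) simp_all
  next
    case (Inr a) then show ?thesis by (cases a) simp_all
  qed
  then show ?thesis by blast
qed

lemma sum_UNIV_ix_plus_ix:
  "sum f (UNIV :: (ix + ix) set) =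
    f (Inl I1) + f (Inl I2) + f (Inl I3) + f (Inr I1) + f (Inr I2) + f (Inr I3)"
  by (simp add: UNIV_ix_plus_ix add.assoc)

lemma quat_to_cmat_entry[simp]:
  "quat_to_cmat A $ Inl i $ Inl j = qz (A$i$j)"
  "quat_to_cmat A $ Inl i $ Inr j = qw (A$i$j)"
  "quat_to_cmat A $ Inr i $ Inl j = - cnj (qw (A$i$j))"
  "quat_to_cmat A $ Inr i $ Inr j = cnj (qz (A$i$j))"
  by (simp_all add: quat_to_cmat_def)

lemma matrix_mult_ix_plus_ix_entry: "((X :: complex^(ix+ix)^(ix+ix)) ** Y) $ r $ s =
  X$r$Inl I1 * Y$Inl I1$s + X$r$Inl I2 * Y$Inl I2$s + X$r$Inl I3 * Y$Inl I3$s +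
  X$r$Inr I1 * Y$Inr I1$s + X$r$Inr I2 * Y$Inr I2$s + X$r$Inr I3 * Y$Inr I3$s"
  by (simp add: matrix_matrix_mult_def sum_UNIV_ix_plus_ix)

lemma quat_to_cmat_mult: "quat_to_cmat (A ** B) = quat_to_cmat A ** quat_to_cmat B"
proof -
  have "quat_to_cmat (A ** B) $ r $ s = (quat_to_cmat A ** quat_to_cmat B) $ r $ s" for r s
    by (cases r; cases s; simp only: matrix_mult_ix_plus_ix_entry matrix_mult_mat3_entry
      quat_to_cmat_entry qz_add qw_add qz_mult qw_mult complex_cnj_add
        complex_cnj_diff complex_cnj_mult complex_cnj_cnj complex_cnj_minus; simp add:
          algebra_simps)
  then show ?thesis by (simp add: vec_eq_iff)
qed

lemma quat_to_cmat_mat1: "quat_to_cmat (mat 1) = mat 1"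
proof -
  have "quat_to_cmat (mat 1) $ r $ s = (mat 1 :: complex^(ix+ix)^(ix+ix)) $ r $ s" for r s
    by (cases r; cases s; simp add: mat_def)
  then show ?thesis by (simp add: vec_eq_iff)
qed

lemma quat_to_cmat_ctrans:
  "quat_to_cmat (ctrans A) = transpose (\<chi> r s. cnj (quat_to_cmat A $ r $ s))"
proof -
  have "quat_to_cmat (ctrans A) $ r $ s = transpose (\<chi> r s. cnj (quat_to_cmat A $ r $ s)) $ r $ s"
    for r s
    by (cases r; cases s; simp add: transpose_def ctrans_entry qz_conj qw_conj)
  then show ?thesis by (simp add: vec_eq_iff)
qed

definition row_add :: "'n \<Rightarrow> 'n \<Rightarrow> complex \<Rightarrow> complex^'n^'n \<Rightarrow> complex^'n^'n" where
  "row_add k l c A = (\<chi> m. if m = k then A$m + c *s A$l else A$m)"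

lemma det_row_add: "k \<noteq> l \<Longrightarrow> det (row_add k l c (A :: complex^'n::finite^'n)) = det A"
proof -
  assume kl: "k \<noteq> l"
  have "row_add k l c A = (\<chi> m. if m = k then row k A + c *s row l A else row m A)"
    by (simp add: row_add_def row_def vec_eq_iff)
  then show ?thesis using det_row_operation[OF kl, of A c] by simp
qed

lemma det_quat_to_cmat_transvection:
  assumes ij: "i \<noteq> j"
  shows "det (quat_to_cmat (transvection i j t)) = 1"
proof -
  let ?R = "row_add (Inr i) (Inr j) (cnj (qz t)) (row_add (Inr i) (Inl j) (- cnj (qw t))
    (row_add (Inl i) (Inr j) (qw t) (row_add (Inl i) (Inl j) (qz t) (mat 1))))"
  have "quat_to_cmat (transvection i j t) $ r $ s = ?R $ r $ s" for r s
    using ij by (cases r; cases s; auto simp: row_add_def transvection_entry mat_def)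
  then have "quat_to_cmat (transvection i j t) = ?R"
    by (simp add: vec_eq_iff)
  then show ?thesis
    using ij by (simp add: det_row_add)
qed

lemma invertible_transvection: "i \<noteq> j \<Longrightarrow> invertible (transvection i j t :: 'a::ring_1 mat3)"
  unfolding invertible_def
  by (rule exI[of _ "transvection i j (-t)"]) (simp add: transvection_add transvection_0)

lemma transvection_group_SL3H: "transvection_group SL3H"
proof
  fix g h :: "quat mat3" and i j :: ix and t :: quat
  show "g \<in> SL3H \<Longrightarrow> invertible g" by (simp add: SL3H_def)
  show "g \<in> SL3H \<Longrightarrow> h \<in> SL3H \<Longrightarrow> g ** h \<in> SL3H"
    by (simp add: SL3H_def invertible_mult quat_to_cmat_mult det_mul)
  show "mat 1 \<in> SL3H"
    by (simp add: SL3H_def quat_to_cmat_mat1 invertible_def)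
  show "g \<in> SL3H \<Longrightarrow> matrix_inv g \<in> SL3H"
  proof -
    assume g: "g \<in> SL3H"
    then have inv: "invertible g" by (simp add: SL3H_def)
    have "invertible (matrix_inv g)" unfolding invertible_def
      using matrix_inv_invertible[OF inv] by blast
    moreover have "det (quat_to_cmat (matrix_inv g)) * det (quat_to_cmat g) = 1"
      by (simp add: det_mul[symmetric] quat_to_cmat_mult[symmetric] matrix_inv_invertible[OF inv]
        quat_to_cmat_mat1)
    ultimately show ?thesis using g by (simp add: SL3H_def)
  qed
  show "i \<noteq> j \<Longrightarrow> transvection i j t \<in> SL3H"
    by (simp add: SL3H_def invertible_transvection det_quat_to_cmat_transvection)
  show "g \<in> SL3H \<Longrightarrow> ctrans g \<in> SL3H"
  proof -
    assume g: "g \<in> SL3H"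
    then have inv: "invertible g" by (simp add: SL3H_def)
    have "ctrans g ** ctrans (matrix_inv g) = mat 1" "ctrans (matrix_inv g) ** ctrans g = mat 1"
      by (simp_all add: ctrans_mult[symmetric] matrix_inv_invertible[OF inv])
    then have "invertible (ctrans g)" unfolding invertible_def by blast
    moreover have "det (quat_to_cmat (ctrans g)) = 1"
      using g by (simp add: quat_to_cmat_ctrans det_cnj_matrix SL3H_def)
    ultimately show ?thesis by (simp add: SL3H_def)
  qed
qed

theorem proposition1p6:
  shows "four_orbits SL3R \<and> four_orbits SL3C \<and> four_orbits SL3H"
  using transvection_group.four_orbits[OF transvection_group_SL3R]
    transvection_group.four_orbits[OF transvection_group_SL3C]
    transvection_group.four_orbits[OF transvection_group_SL3H]
  by blast

end
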